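(* Let $S\subseteq G$ and $T:=G\setminus S$ be such that $t\sqsubset s$ for all $t\in T$ and $s\in S$. Then for all $f\in\mathcal{L}(\mathcal{X}_G)$, $$\underline{E}^{\mathrm{irr}}_G(f(X_G))=\underline{E}^{\mathrm{irr}}_T\big(g(X_T)\big),$$ where $g$ is the function on $\mathcal{X}_T$ defined by $g(x_T):=\underline{E}^{\mathrm{irr}}_{S\mid x_{P(S)}}\big(f(X_S,x_T)\big)$, with $x_{P(S)}$ the restriction of $x_T$ to $P(S)$ (note $P(S)\subseteq T$ and $P(T)=\emptyset$ under the hypothesis).
   Context: Setting: $G$ is a finite set of nodes forming a DAG; node $s$ carries a variable $X_s$ with finite nonempty state space $\mathcal{X}_s$; $\mathcal{X}_S=\times_{s\in S}\mathcal{X}_s$; $\mathcal{L}(\mathcal{X}_S)$ denotes real-valued functions on $\mathcal{X}_S$. $P(s)$: parents of $s$; $s\sqsubset v$: there is a directed path of positive length from $s$ to $v$; $D(s)=\{v:s\sqsubset v\}$; $N(s)=G\setminus(\{s\}\cup D(s))$. For $K\subseteq G$: $P(K)=(\bigcup_{s\in K}P(s))\setminus K$. Local models: nonempty closed convex sets $\mathcal{M}_{s\mid x_{P(s)}}$ of probability mass functions on $\mathcal{X}_s$. Full conditional probability measure on finite $\Omega$: $(A,B)\mapsto P(A\mid B)$ ($B\ne\emptyset$) with (F1) $P(\cdot\mid B)$ a probability measure, $P(B\mid B)=1$; (F2) $P(A\cap C\mid B)=P(A\mid C\cap B)P(C\mid B)$ if $C\cap B\neq\emptyset$. Irrelevant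 natural extension $\mathcal{F}^{\mathrm{irr}}_G$: all full conditional probability measures $P$ on $\mathcal{X}_G$ with $P(X_s\mid x_{N(s)})\in\mathcal{M}_{s\mid x_{P(s)}}$ for all $s,x_{N(s)}$. Unconditional lower expectation: $\underline{E}^{\mathrm{irr}}_G(f(X_G))=\inf\{\sum_{z_G}f(z_G)P(z_G):P\in\mathcal{F}^{\mathrm{irr}}_G\}$. Sub-network: for $K\subseteq G$ and fixed $x_{P(K)}$, the credal network on the DAG restricted to $K$ with local credal sets $\mathcal{M}_{s\mid(z_{P(s)\cap K},x_{P(s)\setminus K})}$; its irrelevant natural extension's lower expectation is $\underline{E}^{\mathrm{irr}}_{K\mid x_{P(K)}}$, written $\underline{E}^{\mathrm{irr}}_K$ when $P(K)=\emptyset$. *)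

theory Defs
  imports "HOL-Analysis.Analysis"
begin

text \<open>A DAG on the node set G is given by a parent map Pa; its edges are (p,c) with c in G, p in Pa c.
  Assignments on a set S of nodes are extensional functions, i.e. elements of PiE S Xs.\<close>

definition dag_edges :: "'n set \<Rightarrow> ('n \<Rightarrow> 'n set) \<Rightarrow> ('n \<times> 'n) set" where
  "dag_edges G Pa = {(p, c). c \<in> G \<and> p \<in> Pa c}"

definition strictly_below :: "'n set \<Rightarrow> ('n \<Rightarrow> 'n set) \<Rightarrow> 'n \<Rightarrow> 'n \<Rightarrow> bool" where
  "strictly_below G Pa s v \<longleftrightarrow> (s, v) \<in> (dag_edges G Pa)\<^sup>+"

definition descendants :: "'n set \<Rightarrow> ('n \<Rightarrow> 'n set) \<Rightarrow> 'n \<Rightarrow> 'n set" where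
  "descendants G Pa s = {v. strictly_below G Pa s v}"

definition nondesc :: "'n set \<Rightarrow> ('n \<Rightarrow> 'n set) \<Rightarrow> 'n \<Rightarrow> 'n set" where
  "nondesc G Pa s = G - ({s} \<union> descendants G Pa s)"

definition parents_of_set :: "('n \<Rightarrow> 'n set) \<Rightarrow> 'n set \<Rightarrow> 'n set" where
  "parents_of_set Pa K = (\<Union>s\<in>K. Pa s) - K"

definition is_pmf_on :: "'v set \<Rightarrow> ('v \<Rightarrow> real) \<Rightarrow> bool" where
  "is_pmf_on A p \<longleftrightarrow> (\<forall>v. 0 \<le> p v) \<and> (\<forall>v. v \<notin> A \<longrightarrow> p v = 0) \<and> sum p A = 1"

definition convex_fun_set :: "('v \<Rightarrow> real) set \<Rightarrow> bool" where
  "convex_fun_set C \<longleftrightarrow> (\<forall>p\<in>C. \<forall>q\<in>C. \<forall>a::real. 0 \<le> a \<and> a \<le> 1 \<longrightarrow>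
      (\<lambda>v. a * p v + (1 - a) * q v) \<in> C)"

definition full_cond_prob :: "'w set \<Rightarrow> ('w set \<Rightarrow> 'w set \<Rightarrow> real) \<Rightarrow> bool" where
  "full_cond_prob \<Omega> P \<longleftrightarrow>
     (\<forall>B. B \<subseteq> \<Omega> \<longrightarrow> B \<noteq> {} \<longrightarrow>
        (\<forall>A. A \<subseteq> \<Omega> \<longrightarrow> 0 \<le> P A B) \<and> P \<Omega> B = 1 \<and>
        (\<forall>A A'. A \<subseteq> \<Omega> \<longrightarrow> A' \<subseteq> \<Omega> \<longrightarrow> A \<inter> A' = {} \<longrightarrow> P (A \<union> A') B = P A B + P A' B) \<and>
        P B B = 1) \<and>
     (\<forall>A B C. A \<subseteq> \<Omega> \<longrightarrow> B \<subseteq> \<Omega> \<longrightarrow> C \<subseteq> \<Omega> \<longrightarrow> C \<inter> B \<noteq> {} \<longrightarrow>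
        P (A \<inter> C) B = P A (C \<inter> B) * P C B)"

definition cond_event :: "('n \<Rightarrow> 'v) set \<Rightarrow> 'n set \<Rightarrow> ('n \<Rightarrow> 'v) \<Rightarrow> ('n \<Rightarrow> 'v) set" where
  "cond_event \<Omega> S x = {z \<in> \<Omega>. \<forall>t\<in>S. z t = x t}"

text \<open>M s x is the local model of s given parent values x
  (x an assignment on Pa s).\<close>
definition credal_network :: "'n set \<Rightarrow> ('n \<Rightarrow> 'n set) \<Rightarrow> ('n \<Rightarrow> 'v set) \<Rightarrow>
    ('n \<Rightarrow> ('n \<Rightarrow> 'v) \<Rightarrow> ('v \<Rightarrow> real) set) \<Rightarrow> bool" where
  "credal_network G Pa Xs M \<longleftrightarrow>
     finite G \<and>
     (\<forall>s\<in>G. Pa s \<subseteq> G) \<and>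
     (\<forall>s\<in>G. \<not> strictly_below G Pa s s) \<and>
     (\<forall>s\<in>G. finite (Xs s) \<and> Xs s \<noteq> {}) \<and>
     (\<forall>s\<in>G. \<forall>x\<in>PiE (Pa s) Xs.
        M s x \<noteq> {} \<and> closed (M s x) \<and> convex_fun_set (M s x) \<and>
        (\<forall>p\<in>M s x. is_pmf_on (Xs s) p))"

definition irr_ext :: "'n set \<Rightarrow> ('n \<Rightarrow> 'n set) \<Rightarrow> ('n \<Rightarrow> 'v set) \<Rightarrow>
    ('n \<Rightarrow> ('n \<Rightarrow> 'v) \<Rightarrow> ('v \<Rightarrow> real) set) \<Rightarrow> (('n \<Rightarrow> 'v) set \<Rightarrow> ('n \<Rightarrow> 'v) set \<Rightarrow> real) set" where
  "irr_ext G Pa Xs M = {P. full_cond_prob (PiE G Xs) P \<and>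
     (\<forall>s\<in>G. \<forall>x\<in>PiE (nondesc G Pa s) Xs.
        (\<lambda>v. if v \<in> Xs s then
                P {z \<in> PiE G Xs. z s = v} (cond_event (PiE G Xs) (nondesc G Pa s) x)
              else 0)
        \<in> M s (restrict x (Pa s)))}"

definition lower_exp_irr :: "'n set \<Rightarrow> ('n \<Rightarrow> 'n set) \<Rightarrow> ('n \<Rightarrow> 'v set) \<Rightarrow>
    ('n \<Rightarrow> ('n \<Rightarrow> 'v) \<Rightarrow> ('v \<Rightarrow> real) set) \<Rightarrow> (('n \<Rightarrow> 'v) \<Rightarrow> real) \<Rightarrow> real" where
  "lower_exp_irr G Pa Xs M f =
     Inf {(\<Sum>z\<in>PiE G Xs. f z * P {z} (PiE G Xs)) | P. P \<in> irr_ext G Pa Xs M}"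

text \<open>Lower expectation of the sub-network on K, given the values x on P(K):
  DAG restricted to K, local models M s (z on Pa s inter K, x on Pa s minus K).\<close>
definition sub_lower_exp :: "'n set \<Rightarrow> ('n \<Rightarrow> 'n set) \<Rightarrow> ('n \<Rightarrow> 'v set) \<Rightarrow>
    ('n \<Rightarrow> ('n \<Rightarrow> 'v) \<Rightarrow> ('v \<Rightarrow> real) set) \<Rightarrow> 'n set \<Rightarrow> ('n \<Rightarrow> 'v) \<Rightarrow>
    (('n \<Rightarrow> 'v) \<Rightarrow> real) \<Rightarrow> real" where
  "sub_lower_exp G Pa Xs M K x f =
     lower_exp_irr K (\<lambda>s. Pa s \<inter> K) Xs
       (\<lambda>s y. M s (restrict (\<lambda>t. if t \<in> K then y t else x t) (Pa s))) f"

end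

theory Submission
  imports Defs
begin

text \<open>
  Every full conditional probability on a finite space is a lexicographic probability system:
  a finite sequence of weight layers, conditioning on B being done with the first layer that
  charges B. When every node of T = G - S lies strictly above every node of S, an element P of
  the irrelevant natural extension splits into its marginal on the T-configurations and its
  conditionals on the S-configurations given x_T, and these lie in the irrelevant natural
  extensions of the two sub-networks. Conversely, a marginal and a family of conditionals taken
  from the sub-networks are glued, by interleaving their layers lexicographically, into an
  element of the irrelevant natural extension of the whole network. Since the expectation under
  P is the iterated expectation, the two lower expectations coincide; the conditionals need only
  be chosen \<epsilon>-optimal. The same gluing with S a sink node shows by induction that irrelevant
  natural extensions are never empty, so that all infima involved are over nonempty sets.
\<close>

section \<open>Full conditional probabilities\<close>

lemma full_cond_probD:
  assumes "full_cond_prob \<Omega> P" "B \<subseteq> \<Omega>" "B \<noteq> {}"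
  shows "A \<subseteq> \<Omega> \<Longrightarrow> 0 \<le> P A B" "P \<Omega> B = 1" "P B B = 1"
    "A \<subseteq> \<Omega> \<Longrightarrow> A' \<subseteq> \<Omega> \<Longrightarrow> A \<inter> A' = {} \<Longrightarrow> P (A \<union> A') B = P A B + P A' B"
  using conjunct1[OF assms(1)[unfolded full_cond_prob_def], rule_format, OF assms(2,3)] by auto

lemma full_cond_prob_mult:
  assumes "full_cond_prob \<Omega> P" "A \<subseteq> \<Omega>" "B \<subseteq> \<Omega>" "C \<subseteq> \<Omega>" "C \<inter> B \<noteq> {}"
  shows "P (A \<inter> C) B = P A (C \<inter> B) * P C B"
  using conjunct2[OF assms(1)[unfolded full_cond_prob_def], rule_format, OF assms(2-5)] .

lemma full_cond_prob_Int_cond: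
  assumes P: "full_cond_prob \<Omega> P" and "A \<subseteq> \<Omega>" "B \<subseteq> \<Omega>" "B \<noteq> {}"
  shows "P (A \<inter> B) B = P A B"
  using full_cond_prob_mult[OF P assms(2,3,3)] full_cond_probD(3)[OF P assms(3,4)] assms(4) by simp

lemma full_cond_prob_sum_singletons:
  assumes P: "full_cond_prob \<Omega> P" and fin: "finite \<Omega>" and B: "B \<subseteq> \<Omega>" "B \<noteq> {}"
    and A: "A \<subseteq> \<Omega>"
  shows "P A B = (\<Sum>w\<in>A. P {w} B)"
proof -
  have "finite A" using A fin finite_subset by auto
  then show ?thesis using A
  proof (induction A rule: finite_induct)
    case empty
    then show ?case using full_cond_probD(4)[OF P B, of "{}" "{}"] by simp
  next
    case (insert x F)
    then have "P ({x} \<union> F) B = P {x} B + P F B"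
      by (intro full_cond_probD(4)[OF P B]) auto
    then show ?case using insert by simp
  qed
qed

lemma full_cond_prob_sum_singletons_eq_1:
  assumes P: "full_cond_prob \<Omega> P" and "finite \<Omega>" "\<Omega> \<noteq> {}"
  shows "(\<Sum>w\<in>\<Omega>. P {w} \<Omega>) = 1"
  using full_cond_prob_sum_singletons[OF P assms(2) order_refl assms(3) order_refl]
    full_cond_probD(2)[OF P order_refl assms(3)] by simp

lemma full_cond_prob_singleton_bounds:
  assumes P: "full_cond_prob \<Omega> P" and "finite \<Omega>" and z: "z \<in> \<Omega>"
  shows "0 \<le> P {z} \<Omega>" "P {z} \<Omega> \<le> 1"
proof -
  have ne: "\<Omega> \<noteq> {}" using z by auto
  have "0 \<le> P {w} \<Omega>" if "w \<in> \<Omega>" for w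
    using full_cond_probD(1)[OF P order_refl ne] that by simp
  then show "0 \<le> P {z} \<Omega>" "P {z} \<Omega> \<le> 1"
    using member_le_sum[of z \<Omega> "\<lambda>w. P {w} \<Omega>"] full_cond_prob_sum_singletons_eq_1[OF P assms(2) ne]
      z assms(2) by auto
qed

lemma full_cond_prob_comp_event_map:
  assumes P: "full_cond_prob \<Omega> P"
    and sub: "\<And>A. A \<subseteq> \<Omega>' \<Longrightarrow> \<phi> A \<subseteq> \<Omega>"
    and un: "\<And>A A'. A \<subseteq> \<Omega>' \<Longrightarrow> A' \<subseteq> \<Omega>' \<Longrightarrow> \<phi> (A \<union> A') = \<phi> A \<union> \<phi> A'"
    and int: "\<And>A A'. A \<subseteq> \<Omega>' \<Longrightarrow> A' \<subseteq> \<Omega>' \<Longrightarrow> \<phi> (A \<inter> A') = \<phi> A \<inter> \<phi> A'"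
    and empty: "\<phi> {} = {}"
    and ne: "\<And>B. B \<subseteq> \<Omega>' \<Longrightarrow> B \<noteq> {} \<Longrightarrow> \<phi> B \<noteq> {}"
  shows "full_cond_prob \<Omega>' (\<lambda>A B. P (\<phi> A) (\<phi> B))"
  unfolding full_cond_prob_def
proof (intro conjI allI impI)
  fix B assume B: "B \<subseteq> \<Omega>'" "B \<noteq> {}"
  have B': "\<phi> B \<subseteq> \<Omega>" "\<phi> B \<noteq> {}" using sub ne B by auto
  note F = full_cond_probD[OF P B']
  show "0 \<le> P (\<phi> A) (\<phi> B)" if "A \<subseteq> \<Omega>'" for A using F(1) sub that by blast
  show "P (\<phi> B) (\<phi> B) = 1" by (rule F(3))
  have "\<phi> \<Omega>' \<inter> \<phi> B = \<phi> B" using int[OF order_refl B(1)] B(1) by (simp add: Int_absorb1)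
  then show "P (\<phi> \<Omega>') (\<phi> B) = 1"
    using full_cond_prob_Int_cond[OF P sub[OF order_refl] B'] F(3) by simp
  show "P (\<phi> (A \<union> A')) (\<phi> B) = P (\<phi> A) (\<phi> B) + P (\<phi> A') (\<phi> B)"
    if A: "A \<subseteq> \<Omega>'" "A' \<subseteq> \<Omega>'" "A \<inter> A' = {}" for A A'
  proof -
    have "\<phi> A \<inter> \<phi> A' = {}" using int[OF A(1,2)] A(3) empty by simp
    then show ?thesis unfolding un[OF A(1,2)] using F(4) sub A by blast
  qed
next
  fix A B C assume A: "A \<subseteq> \<Omega>'" and B: "B \<subseteq> \<Omega>'" and C: "C \<subseteq> \<Omega>'" and CB: "C \<inter> B \<noteq> {}"
  have "\<phi> C \<inter> \<phi> B \<noteq> {}" using ne[of "C \<inter> B"] CB C int[OF C B] by auto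
  then show "P (\<phi> (A \<inter> C)) (\<phi> B) = P (\<phi> A) (\<phi> (C \<inter> B)) * P (\<phi> C) (\<phi> B)"
    unfolding int[OF A C] int[OF C B] by (rule full_cond_prob_mult[OF P sub[OF A] sub[OF B] sub[OF C]])
qed

section \<open>Lexicographic probability systems\<close>

text \<open>The lexicographic probability system with layers l: conditioning on B uses the first layer
  that gives B positive weight (if there is none, the value is junk and never used).\<close>
definition lps_cond :: "(nat \<Rightarrow> 'w \<Rightarrow> real) \<Rightarrow> 'w set \<Rightarrow> 'w set \<Rightarrow> real" where
  "lps_cond l A B = (let k = LEAST k. 0 < sum (l k) B in sum (l k) (A \<inter> B) / sum (l k) B)"

lemma lps_cond_eq:
  assumes "\<forall>k<k0. sum (l k) B = 0" "0 < sum (l k0) B"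
  shows "lps_cond l A B = sum (l k0) (A \<inter> B) / sum (l k0) B"
proof -
  have "(LEAST k. 0 < sum (l k) B) = k0"
    by (rule Least_equality) (use assms in \<open>auto simp: not_less[symmetric]\<close>)
  then show ?thesis unfolding lps_cond_def Let_def by simp
qed

lemma lps_first_charging_layer:
  fixes l :: "nat \<Rightarrow> 'w \<Rightarrow> real"
  assumes nn: "\<And>k w. w \<in> \<Omega> \<Longrightarrow> 0 \<le> l k w" and cov: "\<forall>w\<in>\<Omega>. \<exists>k. 0 < l k w"
    and fin: "finite \<Omega>" and B: "B \<subseteq> \<Omega>" "B \<noteq> {}"
  obtains k0 where "0 < sum (l k0) B" "\<forall>k<k0. \<forall>w\<in>B. l k w = 0"
    "\<forall>A. lps_cond l A B = sum (l k0) (A \<inter> B) / sum (l k0) B"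
proof -
  have nnB: "0 \<le> l k w" if "w \<in> B" for k w using nn that B by blast
  obtain w k where w: "w \<in> B" and k: "0 < l k w" using cov B by blast
  have finB: "finite B" using fin B finite_subset by auto
  have "0 < sum (l k) B"
    by (rule sum_pos2[OF finB w, of "l k"]) (use nnB k in auto)
  then have ex: "\<exists>k. 0 < sum (l k) B" by auto
  define k0 where "k0 = (LEAST k. 0 < sum (l k) B)"
  have pos: "0 < sum (l k0) B" unfolding k0_def by (rule LeastI_ex[OF ex])
  have zero_sum: "\<forall>k<k0. sum (l k) B = 0"
  proof (intro allI impI)
    fix k assume "k < k0"
    then have "\<not> 0 < sum (l k) B" unfolding k0_def by (rule not_less_Least)
    then show "sum (l k) B = 0" using sum_nonneg[of B "l k", OF nnB] by linarith
  qed
  then have "\<forall>k<k0. \<forall>w\<in>B. l k w = 0" using sum_nonneg_eq_0_iff[OF finB] nnB by blast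
  moreover have "\<forall>A. lps_cond l A B = sum (l k0) (A \<inter> B) / sum (l k0) B"
    using lps_cond_eq[OF zero_sum pos] by blast
  ultimately show ?thesis using that pos by blast
qed

lemma lps_cond_mult:
  fixes l :: "nat \<Rightarrow> 'w \<Rightarrow> real"
  assumes nn: "\<And>k w. w \<in> \<Omega> \<Longrightarrow> 0 \<le> l k w" and cov: "\<forall>w\<in>\<Omega>. \<exists>k. 0 < l k w" and fin: "finite \<Omega>"
    and B: "B \<subseteq> \<Omega>" and CB: "C \<inter> B \<noteq> {}"
  shows "lps_cond l (A \<inter> C) B = lps_cond l A (C \<inter> B) * lps_cond l C B"
proof -
  have finB: "finite B" using fin B finite_subset by auto
  have nnB: "0 \<le> l k w" if "w \<in> B" for k w using nn that B by blast
  have "B \<noteq> {}" using CB by auto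
  obtain k where k: "0 < sum (l k) B" "\<forall>k'<k. \<forall>w\<in>B. l k' w = 0"
    and eq: "\<forall>A. lps_cond l A B = sum (l k) (A \<inter> B) / sum (l k) B"
    by (rule lps_first_charging_layer[OF nn cov fin B \<open>B \<noteq> {}\<close>])
  show ?thesis
  proof (cases "0 < sum (l k) (C \<inter> B)")
    case True
    have "\<forall>k'<k. sum (l k') (C \<inter> B) = 0" using k(2) by (auto intro: sum.neutral)
    with True show ?thesis using k by (simp add: eq lps_cond_eq[of k] Int_assoc)
  next
    case False
    have "sum (l k) (C \<inter> B) = 0" using False sum_nonneg[of "C \<inter> B" "l k"] nnB by force
    moreover have "sum (l k) (A \<inter> C \<inter> B) \<le> sum (l k) (C \<inter> B)"
      using finB by (intro sum_mono2) (auto intro: nnB)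
    moreover have "0 \<le> sum (l k) (A \<inter> C \<inter> B)" by (intro sum_nonneg nnB) blast
    ultimately show ?thesis by (simp add: eq Int_assoc)
  qed
qed

lemma full_cond_prob_lps_cond:
  fixes l :: "nat \<Rightarrow> 'w \<Rightarrow> real"
  assumes nn: "\<And>k w. w \<in> \<Omega> \<Longrightarrow> 0 \<le> l k w" and cov: "\<forall>w\<in>\<Omega>. \<exists>k. 0 < l k w" and fin: "finite \<Omega>"
  shows "full_cond_prob \<Omega> (lps_cond l)"
  unfolding full_cond_prob_def
proof (intro conjI allI impI)
  fix B assume B: "B \<subseteq> \<Omega>" "B \<noteq> {}"
  have finB: "finite B" using fin B finite_subset by auto
  obtain k where k: "0 < sum (l k) B" "\<forall>k'<k. \<forall>w\<in>B. l k' w = 0"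
    and eq: "\<forall>A. lps_cond l A B = sum (l k) (A \<inter> B) / sum (l k) B"
    by (rule lps_first_charging_layer[OF nn cov fin B])
  show "0 \<le> lps_cond l A B" for A
    unfolding eq[rule_format] using k B by (intro divide_nonneg_pos sum_nonneg nn) auto
  show "lps_cond l \<Omega> B = 1" "lps_cond l B B = 1"
    unfolding eq[rule_format] using k B by (simp_all add: Int_absorb1)
  show "lps_cond l (A \<union> A') B = lps_cond l A B + lps_cond l A' B" if "A \<inter> A' = {}" for A A'
  proof -
    have "sum (l k) ((A \<union> A') \<inter> B) = sum (l k) (A \<inter> B) + sum (l k) (A' \<inter> B)"
      using finB that by (subst sum.union_disjoint[symmetric]) (auto intro: sum.cong)
    then show ?thesis unfolding eq[rule_format] by (simp add: add_divide_distrib)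
  qed
qed (rule lps_cond_mult[OF nn cov fin])

text \<open>Peeling off, layer by layer, the points of positive conditional probability represents every
  full conditional probability on a finite space as a lexicographic probability system.\<close>
primrec cond_layer :: "'w set \<Rightarrow> ('w set \<Rightarrow> 'w set \<Rightarrow> real) \<Rightarrow> nat \<Rightarrow> 'w set" where
  "cond_layer \<Omega> P 0 = \<Omega>"
| "cond_layer \<Omega> P (Suc k) = {w \<in> cond_layer \<Omega> P k. P {w} (cond_layer \<Omega> P k) \<le> 0}"

definition layer_weights :: "'w set \<Rightarrow> ('w set \<Rightarrow> 'w set \<Rightarrow> real) \<Rightarrow> nat \<Rightarrow> 'w \<Rightarrow> real" where
  "layer_weights \<Omega> P k w = (if w \<in> cond_layer \<Omega> P k then P {w} (cond_layer \<Omega> P k) else 0)"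

text \<open>The bound k < card \<Omega> on the layers needed to cover \<Omega> is what allows the layers of two
  systems to be interleaved lexicographically by a single natural number.\<close>
definition lps_rep :: "'w set \<Rightarrow> ('w set \<Rightarrow> 'w set \<Rightarrow> real) \<Rightarrow> (nat \<Rightarrow> 'w \<Rightarrow> real) \<Rightarrow> bool" where
  "lps_rep \<Omega> P l \<longleftrightarrow> (\<forall>k w. 0 \<le> l k w) \<and> (\<forall>w\<in>\<Omega>. \<exists>k<card \<Omega>. 0 < l k w) \<and>
     (\<forall>w\<in>\<Omega>. l 0 w = P {w} \<Omega>) \<and>
     (\<forall>A B. A \<subseteq> \<Omega> \<longrightarrow> B \<subseteq> \<Omega> \<longrightarrow> B \<noteq> {} \<longrightarrow> P A B = lps_cond l A B)"

lemma lps_repD: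
  assumes "lps_rep \<Omega> P l"
  shows "0 \<le> l k w" "w \<in> \<Omega> \<Longrightarrow> \<exists>k<card \<Omega>. 0 < l k w" "w \<in> \<Omega> \<Longrightarrow> l 0 w = P {w} \<Omega>"
    "A \<subseteq> \<Omega> \<Longrightarrow> B \<subseteq> \<Omega> \<Longrightarrow> B \<noteq> {} \<Longrightarrow> P A B = lps_cond l A B"
  using assms unfolding lps_rep_def by blast+

lemma cond_layer_subset: "cond_layer \<Omega> P k \<subseteq> \<Omega>"
  by (induction k) auto

lemma cond_layer_card_le:
  assumes P: "full_cond_prob \<Omega> P" and fin: "finite \<Omega>"
  shows "card (cond_layer \<Omega> P k) \<le> card \<Omega> - k"
proof (induction k)
  case (Suc k)
  let ?L = "cond_layer \<Omega> P k"
  have finL: "finite ?L" using cond_layer_subset fin finite_subset by metis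
  show ?case
  proof (cases "?L = {}")
    case False
    have "(\<Sum>w\<in>?L. P {w} ?L) = 1"
      using full_cond_prob_sum_singletons[OF P fin cond_layer_subset False cond_layer_subset]
        full_cond_probD(3)[OF P cond_layer_subset False] by simp
    then obtain w where w: "w \<in> ?L" "0 < P {w} ?L"
      by (metis not_le sum_nonpos zero_less_one)
    then have "w \<notin> cond_layer \<Omega> P (Suc k)" by simp
    moreover have "cond_layer \<Omega> P (Suc k) \<subseteq> ?L" by auto
    ultimately have "cond_layer \<Omega> P (Suc k) \<subset> ?L" using w(1) by blast
    then have "card (cond_layer \<Omega> P (Suc k)) < card ?L" by (rule psubset_card_mono[OF finL])
    with Suc show ?thesis by linarith
  qed simp
qed simp

lemma layer_weights_nonneg:
  assumes P: "full_cond_prob \<Omega> P"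
  shows "0 \<le> layer_weights \<Omega> P k w"
proof (cases "w \<in> cond_layer \<Omega> P k")
  case True
  then have "cond_layer \<Omega> P k \<noteq> {}" by auto
  then show ?thesis unfolding layer_weights_def
    using full_cond_probD(1)[OF P cond_layer_subset, of P k "{w}"] True cond_layer_subset[of \<Omega> P k] by auto
qed (simp add: layer_weights_def)

lemma layer_weights_cover:
  assumes P: "full_cond_prob \<Omega> P" and fin: "finite \<Omega>" and w: "w \<in> \<Omega>"
  shows "\<exists>k<card \<Omega>. 0 < layer_weights \<Omega> P k w"
proof -
  have "cond_layer \<Omega> P (card \<Omega>) = {}"
    using cond_layer_card_le[OF P fin, of "card \<Omega>"] card_0_eq[OF finite_subset[OF cond_layer_subset fin]]
    by simp
  then have ex: "\<exists>m. w \<notin> cond_layer \<Omega> P m" by blast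
  define m where "m = (LEAST m. w \<notin> cond_layer \<Omega> P m)"
  have m: "w \<notin> cond_layer \<Omega> P m" unfolding m_def by (rule LeastI_ex[OF ex])
  then obtain k where k: "m = Suc k" using w by (cases m) auto
  have "w \<in> cond_layer \<Omega> P k" using not_less_Least[of k "\<lambda>m. w \<notin> cond_layer \<Omega> P m"] k unfolding m_def by auto
  moreover have "m \<le> card \<Omega>"
    unfolding m_def using \<open>cond_layer \<Omega> P (card \<Omega>) = {}\<close> by (intro Least_le) simp
  ultimately show ?thesis using m k unfolding layer_weights_def by (auto intro!: exI[of _ k])
qed

lemma full_cond_prob_eq_lps_cond_layer_weights:
  assumes P: "full_cond_prob \<Omega> P" and fin: "finite \<Omega>"
    and A: "A \<subseteq> \<Omega>" and B: "B \<subseteq> \<Omega>" "B \<noteq> {}"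
  shows "P A B = lps_cond (layer_weights \<Omega> P) A B"
proof -
  let ?L = "cond_layer \<Omega> P" and ?l = "layer_weights \<Omega> P"
  have cov: "\<forall>w\<in>\<Omega>. \<exists>k. 0 < ?l k w" using layer_weights_cover[OF P fin] by blast
  obtain k0 where pos: "0 < sum (?l k0) B" and zero: "\<forall>k<k0. \<forall>w\<in>B. ?l k w = 0"
    and eq: "\<forall>A. lps_cond ?l A B = sum (?l k0) (A \<inter> B) / sum (?l k0) B"
    by (rule lps_first_charging_layer[OF layer_weights_nonneg[OF P] cov fin B])
  have "k \<le> k0 \<Longrightarrow> B \<subseteq> ?L k" for k
  proof (induction k)
    case (Suc k)
    then have "B \<subseteq> ?L k" "k < k0" by auto
    then show ?case using zero[rule_format, OF \<open>k < k0\<close>] by (force simp: layer_weights_def)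
  qed (use B in simp)
  then have BL: "B \<subseteq> ?L k0" by simp
  then have Lne: "?L k0 \<noteq> {}" using B by auto
  have sums: "sum (?l k0) X = P X (?L k0)" if "X \<subseteq> B" for X
  proof -
    have "P X (?L k0) = (\<Sum>w\<in>X. P {w} (?L k0))"
      using full_cond_prob_sum_singletons[OF P fin cond_layer_subset Lne] that B by auto
    also have "\<dots> = sum (?l k0) X" using that BL unfolding layer_weights_def by (intro sum.cong) auto
    finally show ?thesis by simp
  qed
  have "P (A \<inter> B) (?L k0) = P A B * P B (?L k0)"
    using full_cond_prob_mult[OF P A cond_layer_subset B(1)] BL B by (auto simp: Int_absorb2)
  then have "P A B = P (A \<inter> B) (?L k0) / P B (?L k0)"
    using pos sums[of B] by simp
  then show ?thesis using sums eq by simp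
qed

lemma lps_rep_layer_weights:
  assumes "full_cond_prob \<Omega> P" "finite \<Omega>"
  shows "lps_rep \<Omega> P (layer_weights \<Omega> P)"
  unfolding lps_rep_def
  using layer_weights_nonneg[OF assms(1)] layer_weights_cover[OF assms]
    full_cond_prob_eq_lps_cond_layer_weights[OF assms]
  by (simp add: layer_weights_def[of _ _ 0])

lemma lps_rep_first_layer_sum:
  assumes "full_cond_prob \<Omega> P" "finite \<Omega>" "\<Omega> \<noteq> {}" "lps_rep \<Omega> P l"
  shows "sum (l 0) \<Omega> = 1"
  using full_cond_prob_sum_singletons_eq_1[OF assms(1-3)] lps_repD(3)[OF assms(4)] by simp

lemma lps_rep_first_charging_layer:
  assumes r: "lps_rep \<Omega> P l" and fin: "finite \<Omega>" and B: "B \<subseteq> \<Omega>" "B \<noteq> {}"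
  obtains k0 where "0 < sum (l k0) B" "\<forall>k<k0. \<forall>w\<in>B. l k w = 0" "k0 < card \<Omega>"
    "\<forall>A. A \<subseteq> \<Omega> \<longrightarrow> P A B = sum (l k0) (A \<inter> B) / sum (l k0) B"
proof -
  have nn: "0 \<le> l k w" if "w \<in> \<Omega>" for k w using lps_repD(1)[OF r] .
  have cov: "\<forall>w\<in>\<Omega>. \<exists>k. 0 < l k w" using lps_repD(2)[OF r] by blast
  obtain k0 where pos: "0 < sum (l k0) B" and zero: "\<forall>k<k0. \<forall>w\<in>B. l k w = 0"
    and eq: "\<forall>A. lps_cond l A B = sum (l k0) (A \<inter> B) / sum (l k0) B"
    by (rule lps_first_charging_layer[OF nn cov fin B])
  obtain w k where "w \<in> B" "k < card \<Omega>" "0 < l k w" using lps_repD(2)[OF r] B by blast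
  then have "k0 \<le> k" using zero by (metis leI less_irrefl)
  with \<open>k < card \<Omega>\<close> have "k0 < card \<Omega>" by simp
  then show ?thesis using that pos zero eq lps_repD(4)[OF r _ B] by simp
qed

section \<open>Gluing full conditional probabilities on a product\<close>

lemma div_mod_lex_less:
  fixes n i j k :: nat
  assumes j: "j < n" and k: "k < i * n + j"
  shows "k div n < i \<or> (k div n = i \<and> k mod n < j)"
proof -
  have "k div n * n \<le> k" by (rule div_times_less_eq_dividend)
  then have "k div n * n < i * n + n" using j k by linarith
  then have "k div n * n < Suc i * n" by simp
  then have "k div n \<le> i" using mult_less_cancel2 by (metis less_Suc_eq_le)
  moreover have "k div n = i \<Longrightarrow> k mod n < j" using div_mult_mod_eq[of k n] k by simp
  ultimately show ?thesis by linarith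
qed

locale partitioned_space =
  fixes G T S :: "'n set" and Xs :: "'n \<Rightarrow> 'v set"
  assumes disjoint: "T \<inter> S = {}" and cover: "T \<union> S = G" and finite_G: "finite G"
    and finite_states: "\<forall>n\<in>G. finite (Xs n) \<and> Xs n \<noteq> {}"
begin

abbreviation "XT \<equiv> PiE T Xs"
abbreviation "XS \<equiv> PiE S Xs"
abbreviation "XG \<equiv> PiE G Xs"

definition join :: "('n \<Rightarrow> 'v) \<Rightarrow> ('n \<Rightarrow> 'v) \<Rightarrow> ('n \<Rightarrow> 'v)" where
  "join x y = (\<lambda>n. if n \<in> S then y n else x n)"

definition sigma_event :: "('n \<Rightarrow> 'v) set \<Rightarrow> (('n \<Rightarrow> 'v) \<Rightarrow> ('n \<Rightarrow> 'v) set) \<Rightarrow> ('n \<Rightarrow> 'v) set" where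
  "sigma_event E W = {z \<in> XG. restrict z T \<in> E \<and> restrict z S \<in> W (restrict z T)}"

lemma finite_XT: "finite XT" and finite_XS: "finite XS" and finite_XG: "finite XG"
  using finite_G finite_states disjoint cover by (auto intro!: finite_PiE)

lemma XT_nonempty: "XT \<noteq> {}" and XS_nonempty: "XS \<noteq> {}"
  using finite_states cover by (auto simp: PiE_eq_empty_iff)

lemma join_in: "x \<in> XT \<Longrightarrow> y \<in> XS \<Longrightarrow> join x y \<in> XG"
  using disjoint cover unfolding join_def by (auto simp: PiE_def Pi_def extensional_def)

lemma restrict_join_T: "x \<in> XT \<Longrightarrow> restrict (join x y) T = x"
  using disjoint unfolding join_def by (intro ext) (auto simp: PiE_def extensional_def)

lemma restrict_join_S: "y \<in> XS \<Longrightarrow> restrict (join x y) S = y"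
  unfolding join_def by (intro ext) (auto simp: PiE_def extensional_def)

lemma join_restrict: "z \<in> XG \<Longrightarrow> join (restrict z T) (restrict z S) = z"
  using cover unfolding join_def by (intro ext) (auto simp: PiE_def extensional_def)

lemma restrict_T_in: "z \<in> XG \<Longrightarrow> restrict z T \<in> XT"
  and restrict_S_in: "z \<in> XG \<Longrightarrow> restrict z S \<in> XS"
  using cover by (auto simp: PiE_def Pi_def)

lemma sigma_event_eq_image:
  assumes "E \<subseteq> XT" "\<forall>x\<in>E. W x \<subseteq> XS"
  shows "sigma_event E W = (\<lambda>(x, y). join x y) ` Sigma E W"
proof
  show "sigma_event E W \<subseteq> (\<lambda>(x, y). join x y) ` Sigma E W"
  proof
    fix z assume "z \<in> sigma_event E W"
    then have z: "z \<in> XG" "restrict z T \<in> E" "restrict z S \<in> W (restrict z T)"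
      unfolding sigma_event_def by auto
    then show "z \<in> (\<lambda>(x, y). join x y) ` Sigma E W"
      using join_restrict[OF z(1)] by (intro image_eqI[of _ _ "(restrict z T, restrict z S)"]) auto
  qed
  show "(\<lambda>(x, y). join x y) ` Sigma E W \<subseteq> sigma_event E W"
  proof
    fix z assume "z \<in> (\<lambda>(x, y). join x y) ` Sigma E W"
    then obtain x y where xy: "x \<in> E" "y \<in> W x" "z = join x y" by auto
    then have "x \<in> XT" "y \<in> XS" using assms by blast+
    then show "z \<in> sigma_event E W" unfolding sigma_event_def
      using xy join_in restrict_join_T restrict_join_S by simp
  qed
qed

lemma sum_sigma_event:
  assumes E: "E \<subseteq> XT" and W: "\<forall>x\<in>E. W x \<subseteq> XS"
  shows "sum h (sigma_event E W) = (\<Sum>x\<in>E. \<Sum>y\<in>W x. h (join x y))"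
proof -
  have inj: "inj_on (\<lambda>(x, y). join x y) (Sigma E W)"
  proof (rule inj_onI)
    fix a b assume a: "a \<in> Sigma E W" and b: "b \<in> Sigma E W"
      and eq: "(\<lambda>(x, y). join x y) a = (\<lambda>(x, y). join x y) b"
    obtain x y where a': "a = (x, y)" "x \<in> XT" "y \<in> XS" using a E W by force
    obtain x' y' where b': "b = (x', y')" "x' \<in> XT" "y' \<in> XS" using b E W by force
    have "join x y = join x' y'" using eq a' b' by simp
    then have "x = x'" "y = y'"
      using restrict_join_T a'(2) b'(2) restrict_join_S a'(3) b'(3) by metis+
    then show "a = b" using a' b' by simp
  qed
  have fin: "finite E" "\<forall>x\<in>E. finite (W x)"
    using finite_subset[OF E finite_XT] W finite_XS by (auto intro: finite_subset)
  have "sum h (sigma_event E W) = sum (h \<circ> (\<lambda>(x, y). join x y)) (Sigma E W)"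
    unfolding sigma_event_eq_image[OF E W] by (rule sum.reindex[OF inj])
  also have "\<dots> = (\<Sum>x\<in>E. \<Sum>y\<in>W x. h (join x y))"
    using sum.Sigma[OF fin, of "\<lambda>x y. h (join x y)"] by (simp add: case_prod_unfold o_def)
  finally show ?thesis .
qed

lemma sigma_event_univ: "sigma_event XT (\<lambda>_. XS) = XG"
  unfolding sigma_event_def using restrict_T_in restrict_S_in by auto

lemma sigma_event_subset: "sigma_event E W \<subseteq> XG"
  unfolding sigma_event_def by auto

lemma sigma_event_Int: "sigma_event E W \<inter> sigma_event E' W' = sigma_event (E \<inter> E') (\<lambda>x. W x \<inter> W' x)"
  unfolding sigma_event_def by auto

lemma sigma_event_nonempty:
  assumes "x \<in> E" "E \<subseteq> XT" "y \<in> W x" "W x \<subseteq> XS"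
  shows "sigma_event E W \<noteq> {}"
proof -
  have "x \<in> XT" "y \<in> XS" using assms by auto
  then have "join x y \<in> sigma_event E W" unfolding sigma_event_def
    using assms join_in restrict_join_T restrict_join_S by simp
  then show ?thesis by auto
qed

lemma sigma_event_singleton:
  assumes x: "x \<in> XT" and y: "y \<in> XS"
  shows "sigma_event {x} (\<lambda>_. {y}) = {join x y}"
proof
  show "{join x y} \<subseteq> sigma_event {x} (\<lambda>_. {y})" unfolding sigma_event_def
    using join_in[OF x y] restrict_join_T[OF x] restrict_join_S[OF y] by simp
  show "sigma_event {x} (\<lambda>_. {y}) \<subseteq> {join x y}"
    unfolding sigma_event_def using join_restrict by force
qed

lemma full_cond_prob_point_chain:
  assumes P: "full_cond_prob XG P" and x: "x \<in> XT" and y: "y \<in> XS"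
  shows "P {join x y} XG =
    P (sigma_event {x} (\<lambda>_. XS)) (sigma_event XT (\<lambda>_. XS)) *
    P (sigma_event {x} (\<lambda>_. {y})) (sigma_event {x} (\<lambda>_. XS))"
proof -
  let ?C = "sigma_event {x} (\<lambda>_. XS)"
  have "?C \<inter> XG \<noteq> {}"
    using sigma_event_nonempty[of x "{x}" y] x y sigma_event_subset[of "{x}"] by (auto simp: Int_absorb2)
  then have "P (sigma_event {x} (\<lambda>_. {y}) \<inter> ?C) XG = P (sigma_event {x} (\<lambda>_. {y})) (?C \<inter> XG) * P ?C XG"
    by (rule full_cond_prob_mult[OF P sigma_event_subset order_refl sigma_event_subset])
  moreover have "sigma_event {x} (\<lambda>_. {y}) \<inter> ?C = {join x y}"
    using y sigma_event_singleton[OF x y] unfolding sigma_event_Int by simp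
  moreover have "?C \<inter> XG = ?C" using sigma_event_subset by auto
  ultimately show ?thesis unfolding sigma_event_univ by simp
qed

end

text \<open>The layers of the glued system are the products of the layers of PT and of Q x, ordered
  lexicographically through k \<mapsto> (k div card XS, k mod card XS).\<close>
locale fcp_combination = partitioned_space G T S Xs for G T S :: "'n set" and Xs :: "'n \<Rightarrow> 'v set" +
  fixes PT :: "('n \<Rightarrow> 'v) set \<Rightarrow> ('n \<Rightarrow> 'v) set \<Rightarrow> real"
    and Q :: "('n \<Rightarrow> 'v) \<Rightarrow> ('n \<Rightarrow> 'v) set \<Rightarrow> ('n \<Rightarrow> 'v) set \<Rightarrow> real"
  assumes PT: "full_cond_prob XT PT" and Q: "\<forall>x\<in>XT. full_cond_prob XS (Q x)"
begin

definition "lT = layer_weights XT PT"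
definition "lS x = layer_weights XS (Q x)"
definition "comb_weights k z =
  lT (k div card XS) (restrict z T) * lS (restrict z T) (k mod card XS) (restrict z S)"
definition "comb = lps_cond comb_weights"

lemma lps_rep_lT: "lps_rep XT PT lT"
  unfolding lT_def by (rule lps_rep_layer_weights[OF PT finite_XT])

lemma lps_rep_lS: "x \<in> XT \<Longrightarrow> lps_rep XS (Q x) (lS x)"
  unfolding lS_def using Q by (intro lps_rep_layer_weights finite_XS) auto

lemma card_XS_pos: "0 < card XS"
  using finite_XS XS_nonempty by (simp add: card_gt_0_iff)

lemma div_mod_card_XS: "j < card XS \<Longrightarrow> (i * card XS + j) div card XS = i"
  "j < card XS \<Longrightarrow> (i * card XS + j) mod card XS = j"
  by auto

lemma sum_comb_weights:
  assumes E: "E \<subseteq> XT" and W: "\<forall>x\<in>E. W x \<subseteq> XS"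
  shows "sum (comb_weights k) (sigma_event E W) =
    (\<Sum>x\<in>E. lT (k div card XS) x * sum (lS x (k mod card XS)) (W x))"
proof -
  have "sum (comb_weights k) (sigma_event E W) =
      (\<Sum>x\<in>E. \<Sum>y\<in>W x. lT (k div card XS) x * lS x (k mod card XS) y)"
    unfolding sum_sigma_event[OF E W]
  proof (intro sum.cong refl)
    fix x y assume "x \<in> E" "y \<in> W x"
    then have "x \<in> XT" "y \<in> XS" using E W by blast+
    then show "comb_weights k (join x y) = lT (k div card XS) x * lS x (k mod card XS) y"
      unfolding comb_weights_def by (simp add: restrict_join_T restrict_join_S)
  qed
  then show ?thesis by (simp add: sum_distrib_left)
qed

lemma full_cond_prob_comb: "full_cond_prob XG comb"
  unfolding comb_def
proof (rule full_cond_prob_lps_cond[OF _ _ finite_XG])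
  fix k z assume "z \<in> XG"
  then show "0 \<le> comb_weights k z" unfolding comb_weights_def
    using lps_repD(1)[OF lps_rep_lT] lps_repD(1)[OF lps_rep_lS] restrict_T_in by simp
next
  show "\<forall>z\<in>XG. \<exists>k. 0 < comb_weights k z"
  proof
    fix z assume z: "z \<in> XG"
    define x y where "x = restrict z T" and "y = restrict z S"
    have x: "x \<in> XT" and y: "y \<in> XS" using z restrict_T_in restrict_S_in x_def y_def by auto
    obtain i where "0 < lT i x" using lps_repD(2)[OF lps_rep_lT x] by blast
    moreover obtain j where "j < card XS" "0 < lS x j y" using lps_repD(2)[OF lps_rep_lS[OF x] y] by blast
    ultimately have "0 < comb_weights (i * card XS + j) z"
      unfolding comb_weights_def x_def[symmetric] y_def[symmetric] div_mod_card_XS by simp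
    then show "\<exists>k. 0 < comb_weights k z" by blast
  qed
qed

lemma comb_marginal_common_layer:
  assumes A: "A \<subseteq> XT" and E: "E \<subseteq> XT" "E \<noteq> {}" and W: "W \<subseteq> XS"
    and j0: "j0 < card XS" and c: "0 < c"
    and first: "\<forall>x\<in>E. (\<forall>j<j0. sum (lS x j) W = 0) \<and> sum (lS x j0) W = c"
  shows "comb (sigma_event A (\<lambda>_. XS)) (sigma_event E (\<lambda>_. W)) = PT A E"
proof -
  obtain i0 where pos: "0 < sum (lT i0) E" and zero: "\<forall>i<i0. \<forall>x\<in>E. lT i x = 0"
    and "i0 < card XT" and PT_eq: "\<forall>A. A \<subseteq> XT \<longrightarrow> PT A E = sum (lT i0) (A \<inter> E) / sum (lT i0) E"
    by (rule lps_rep_first_charging_layer[OF lps_rep_lT finite_XT E])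
  have sums: "sum (comb_weights k) (sigma_event X (\<lambda>_. W)) =
      (\<Sum>x\<in>X. lT (k div card XS) x * sum (lS x (k mod card XS)) W)" if "X \<subseteq> E" for X k
    using sum_comb_weights[of X "\<lambda>_. W" k] that E W by auto
  let ?k0 = "i0 * card XS + j0"
  have "\<forall>k<?k0. sum (comb_weights k) (sigma_event E (\<lambda>_. W)) = 0"
  proof (intro allI impI)
    fix k assume "k < ?k0"
    then have "k div card XS < i0 \<or> (k div card XS = i0 \<and> k mod card XS < j0)"
      using div_mod_lex_less j0 by blast
    then show "sum (comb_weights k) (sigma_event E (\<lambda>_. W)) = 0"
      unfolding sums[OF order_refl] using zero first by (auto intro!: sum.neutral)
  qed
  moreover have k0: "sum (comb_weights ?k0) (sigma_event X (\<lambda>_. W)) = c * sum (lT i0) X"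
    if "X \<subseteq> E" for X
  proof -
    have "(\<Sum>x\<in>X. lT i0 x * sum (lS x j0) W) = (\<Sum>x\<in>X. c * lT i0 x)"
      using first that by (intro sum.cong) auto
    then show ?thesis unfolding sums[OF that] div_mod_card_XS[OF j0] by (simp add: sum_distrib_left)
  qed
  ultimately have "comb (sigma_event A (\<lambda>_. XS)) (sigma_event E (\<lambda>_. W)) =
      sum (comb_weights ?k0) (sigma_event A (\<lambda>_. XS) \<inter> sigma_event E (\<lambda>_. W)) /
      sum (comb_weights ?k0) (sigma_event E (\<lambda>_. W))"
    unfolding comb_def using pos c by (intro lps_cond_eq) (simp_all add: k0)
  also have "sigma_event A (\<lambda>_. XS) \<inter> sigma_event E (\<lambda>_. W) = sigma_event (A \<inter> E) (\<lambda>_. W)"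
    unfolding sigma_event_Int using W by (simp add: Int_absorb1)
  finally show ?thesis using k0[of "A \<inter> E"] k0[OF order_refl] c PT_eq A by simp
qed

lemma comb_marginal:
  assumes "A \<subseteq> XT" "B \<subseteq> XT" "B \<noteq> {}"
  shows "comb (sigma_event A (\<lambda>_. XS)) (sigma_event B (\<lambda>_. XS)) = PT A B"
proof (rule comb_marginal_common_layer[OF assms order_refl card_XS_pos zero_less_one])
  show "\<forall>x\<in>B. (\<forall>j<0. sum (lS x j) XS = 0) \<and> sum (lS x 0) XS = 1"
    using lps_rep_first_layer_sum[OF _ finite_XS XS_nonempty lps_rep_lS] Q assms(2) by blast
qed

lemma comb_marginal_given:
  assumes A: "A \<subseteq> XT" and E: "E \<subseteq> XT" "E \<noteq> {}" and W: "W \<subseteq> XS" "W \<noteq> {}"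
    and Q_const: "\<forall>x\<in>E. \<forall>x'\<in>E. Q x = Q x'"
  shows "comb (sigma_event A (\<lambda>_. XS)) (sigma_event E (\<lambda>_. W)) = PT A E"
proof -
  obtain x0 where x0: "x0 \<in> E" using E by auto
  then have x0T: "x0 \<in> XT" using E by auto
  from x0 have lS_eq: "\<forall>x\<in>E. lS x = lS x0" using Q_const unfolding lS_def by metis
  obtain j0 where pos: "0 < sum (lS x0 j0) W" and zero: "\<forall>j<j0. \<forall>y\<in>W. lS x0 j y = 0"
    and j0: "j0 < card XS"
    and "\<forall>A. A \<subseteq> XS \<longrightarrow> Q x0 A W = sum (lS x0 j0) (A \<inter> W) / sum (lS x0 j0) W"
    by (rule lps_rep_first_charging_layer[OF lps_rep_lS[OF x0T] finite_XS W])
  show ?thesis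
    by (rule comb_marginal_common_layer[OF A E W(1) j0 pos]) (use lS_eq zero in auto)
qed

lemma comb_conditional:
  assumes x: "x \<in> XT" and A: "A \<subseteq> XS" and B: "B \<subseteq> XS" "B \<noteq> {}"
  shows "comb (sigma_event {x} (\<lambda>_. A)) (sigma_event {x} (\<lambda>_. B)) = Q x A B"
proof -
  have "{x} \<subseteq> XT" using x by simp
  then obtain i0 where pos: "0 < sum (lT i0) {x}" and zero: "\<forall>i<i0. \<forall>x'\<in>{x}. lT i x' = 0"
    and "i0 < card XT" and "\<forall>A. A \<subseteq> XT \<longrightarrow> PT A {x} = sum (lT i0) (A \<inter> {x}) / sum (lT i0) {x}"
    by (rule lps_rep_first_charging_layer[OF lps_rep_lT finite_XT]) simp
  obtain j0 where qpos: "0 < sum (lS x j0) B" and qzero: "\<forall>j<j0. \<forall>y\<in>B. lS x j y = 0"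
    and j0: "j0 < card XS"
    and Q_eq: "\<forall>A. A \<subseteq> XS \<longrightarrow> Q x A B = sum (lS x j0) (A \<inter> B) / sum (lS x j0) B"
    by (rule lps_rep_first_charging_layer[OF lps_rep_lS[OF x] finite_XS B])
  have sums: "sum (comb_weights k) (sigma_event {x} (\<lambda>_. Y)) =
      lT (k div card XS) x * sum (lS x (k mod card XS)) Y" if "Y \<subseteq> XS" for Y k
    using sum_comb_weights[of "{x}" "\<lambda>_. Y" k] x that by simp
  let ?k0 = "i0 * card XS + j0"
  have "\<forall>k<?k0. sum (comb_weights k) (sigma_event {x} (\<lambda>_. B)) = 0"
  proof (intro allI impI)
    fix k assume "k < ?k0"
    then have "k div card XS < i0 \<or> (k div card XS = i0 \<and> k mod card XS < j0)"
      using div_mod_lex_less j0 by blast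
    then show "sum (comb_weights k) (sigma_event {x} (\<lambda>_. B)) = 0"
      unfolding sums[OF B(1)] using zero qzero by (auto intro!: sum.neutral)
  qed
  moreover have "0 < lT i0 x" using pos by simp
  moreover have "sigma_event {x} (\<lambda>_. A) \<inter> sigma_event {x} (\<lambda>_. B) = sigma_event {x} (\<lambda>_. A \<inter> B)"
    unfolding sigma_event_Int by simp
  ultimately have "comb (sigma_event {x} (\<lambda>_. A)) (sigma_event {x} (\<lambda>_. B)) =
      sum (comb_weights ?k0) (sigma_event {x} (\<lambda>_. A \<inter> B)) / sum (comb_weights ?k0) (sigma_event {x} (\<lambda>_. B))"
    unfolding comb_def using qpos
    by (subst lps_cond_eq[of "i0 * card XS + j0"]) (simp_all add: sums[OF B(1)] div_mod_card_XS[OF j0] j0)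
  also have "\<dots> = sum (lS x j0) (A \<inter> B) / sum (lS x j0) B"
    using A B \<open>0 < lT i0 x\<close> by (simp add: sums div_mod_card_XS[OF j0] j0 le_infI1)
  finally show ?thesis using Q_eq A by simp
qed

lemma comb_point:
  assumes x: "x \<in> XT" and y: "y \<in> XS"
  shows "comb {join x y} XG = PT {x} XT * Q x {y} XS"
  using full_cond_prob_point_chain[OF full_cond_prob_comb x y] comb_conditional[OF x _ order_refl XS_nonempty]
    comb_marginal[OF _ order_refl XT_nonempty] x y
  unfolding sigma_event_univ[symmetric] by simp

end

section \<open>Credal networks\<close>

lemma trancl_restrict_closed_backward:
  assumes closed: "\<forall>a b. (a, b) \<in> R \<longrightarrow> b \<in> Y \<longrightarrow> a \<in> Y"
    and ab: "(a, b) \<in> R\<^sup>+" and b: "b \<in> Y"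
  shows "(a, b) \<in> (R \<inter> Y \<times> Y)\<^sup>+"
  using ab b
proof (induction rule: trancl_induct)
  case (base y)
  then show ?case using closed by auto
next
  case (step y z)
  then have "y \<in> Y" using closed by blast
  then have "(a, y) \<in> (R \<inter> Y \<times> Y)\<^sup>+" "(y, z) \<in> R \<inter> Y \<times> Y" using step by auto
  then show ?case by (rule trancl_into_trancl)
qed

lemma trancl_restrict_closed_forward:
  assumes closed: "\<forall>a b. (a, b) \<in> R \<longrightarrow> a \<in> X \<longrightarrow> b \<in> X"
    and ab: "(a, b) \<in> R\<^sup>+" and a: "a \<in> X"
  shows "(a, b) \<in> (R \<inter> X \<times> X)\<^sup>+ \<and> b \<in> X"
  using ab
proof (induction rule: trancl_induct)
  case (base y)
  then show ?case using closed a by auto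
next
  case (step y z)
  then have "z \<in> X" using closed by blast
  then have "(a, y) \<in> (R \<inter> X \<times> X)\<^sup>+" "(y, z) \<in> R \<inter> X \<times> X" using step by auto
  then show ?case using \<open>z \<in> X\<close> by (blast intro: trancl_into_trancl)
qed

lemma trancl_Int_TimesD: "(a, b) \<in> (R \<inter> X \<times> X)\<^sup>+ \<Longrightarrow> (a, b) \<in> R\<^sup>+ \<and> b \<in> X"
  by (induction rule: trancl_induct) auto

lemma credal_networkD:
  assumes "credal_network G Pa Xs M"
  shows "finite G" "s \<in> G \<Longrightarrow> Pa s \<subseteq> G" "s \<in> G \<Longrightarrow> \<not> strictly_below G Pa s s"
    "s \<in> G \<Longrightarrow> finite (Xs s)" "s \<in> G \<Longrightarrow> Xs s \<noteq> {}"
    "s \<in> G \<Longrightarrow> x \<in> PiE (Pa s) Xs \<Longrightarrow>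
      M s x \<noteq> {} \<and> closed (M s x) \<and> convex_fun_set (M s x) \<and> (\<forall>p\<in>M s x. is_pmf_on (Xs s) p)"
  using assms unfolding credal_network_def by blast+

lemma irr_extD:
  assumes "P \<in> irr_ext G Pa Xs M"
  shows "full_cond_prob (PiE G Xs) P"
    "u \<in> G \<Longrightarrow> x \<in> PiE (nondesc G Pa u) Xs \<Longrightarrow>
      (\<lambda>v. if v \<in> Xs u then P {z \<in> PiE G Xs. z u = v} (cond_event (PiE G Xs) (nondesc G Pa u) x) else 0)
        \<in> M u (restrict x (Pa u))"
  using assms unfolding irr_ext_def by auto

lemma descendants_iff: "v \<in> descendants G Pa s \<longleftrightarrow> (s, v) \<in> (dag_edges G Pa)\<^sup>+"
  unfolding descendants_def strictly_below_def by simp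

lemma dag_edges_restrict: "K \<subseteq> G \<Longrightarrow> dag_edges K (\<lambda>u. Pa u \<inter> K) = dag_edges G Pa \<inter> K \<times> K"
  unfolding dag_edges_def by auto

lemma parent_in_nondesc:
  assumes net: "credal_network G Pa Xs M" and u: "u \<in> G" and p: "p \<in> Pa u"
  shows "p \<in> nondesc G Pa u"
proof -
  have e: "(p, u) \<in> dag_edges G Pa" using u p unfolding dag_edges_def by auto
  have "p \<noteq> u" and "p \<notin> descendants G Pa u"
    using credal_networkD(3)[OF net u] e trancl_into_trancl[OF _ e]
    unfolding strictly_below_def descendants_iff by auto
  then show ?thesis unfolding nondesc_def using credal_networkD(2)[OF net u] p by auto
qed

lemma restrict_PiE_subset: "x \<in> PiE A Xs \<Longrightarrow> B \<subseteq> A \<Longrightarrow> restrict x B \<in> PiE B Xs"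
  by (auto simp: PiE_def Pi_def)

lemma cond_event_nonempty:
  assumes K: "K \<subseteq> D" and x: "x \<in> PiE K Xs" and ne: "\<forall>n\<in>D. Xs n \<noteq> {}"
  shows "cond_event (PiE D Xs) K x \<noteq> {}"
proof -
  define z where "z n = (if n \<in> K then x n else if n \<in> D then (SOME v. v \<in> Xs n) else undefined)" for n
  have "z \<in> PiE D Xs" using K x ne unfolding z_def by (auto simp: PiE_def Pi_def some_in_eq extensional_def)
  moreover have "\<forall>t\<in>K. z t = x t" unfolding z_def by simp
  ultimately show ?thesis unfolding cond_event_def by blast
qed

lemma cond_event_restrict: "K \<subseteq> K' \<Longrightarrow> cond_event \<Omega> K (restrict x K') = cond_event \<Omega> K x"
  unfolding cond_event_def by auto

lemma credal_network_restrict: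
  assumes net: "credal_network G Pa Xs M" and K: "K \<subseteq> G"
    and x: "\<forall>u\<in>K. \<forall>t\<in>Pa u - K. x t \<in> Xs t"
  shows "credal_network K (\<lambda>u. Pa u \<inter> K) Xs
           (\<lambda>u y. M u (restrict (\<lambda>t. if t \<in> K then y t else x t) (Pa u)))"
proof -
  have acyclic: "\<not> strictly_below K (\<lambda>u. Pa u \<inter> K) u u" if u: "u \<in> K" for u
  proof
    assume "strictly_below K (\<lambda>u. Pa u \<inter> K) u u"
    then have "(u, u) \<in> (dag_edges G Pa)\<^sup>+"
      unfolding strictly_below_def dag_edges_restrict[OF K] by (blast dest: trancl_Int_TimesD)
    then show False using credal_networkD(3)[OF net] u K unfolding strictly_below_def by blast
  qed
  have "M u (restrict (\<lambda>t. if t \<in> K then y t else x t) (Pa u)) \<noteq> {} \<and>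
      closed (M u (restrict (\<lambda>t. if t \<in> K then y t else x t) (Pa u))) \<and>
      convex_fun_set (M u (restrict (\<lambda>t. if t \<in> K then y t else x t) (Pa u))) \<and>
      (\<forall>p\<in>M u (restrict (\<lambda>t. if t \<in> K then y t else x t) (Pa u)). is_pmf_on (Xs u) p)"
    if u: "u \<in> K" and y: "y \<in> PiE (Pa u \<inter> K) Xs" for u y
  proof -
    have "restrict (\<lambda>t. if t \<in> K then y t else x t) (Pa u) \<in> PiE (Pa u) Xs"
      using u y x by (auto simp: PiE_def Pi_def)
    then show ?thesis by (rule credal_networkD(6)[OF net, rotated]) (use u K in blast)
  qed
  then show ?thesis unfolding credal_network_def
    using credal_networkD(1,4,5)[OF net] finite_subset[OF K] acyclic K by auto
qed

lemma credal_network_sink: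
  assumes net: "credal_network G Pa Xs M" and ne: "G \<noteq> {}"
  obtains s where "s \<in> G" "\<forall>t\<in>G. s \<notin> Pa t"
proof -
  let ?R = "dag_edges G Pa"
  have RG: "?R \<subseteq> G \<times> G" unfolding dag_edges_def using credal_networkD(2)[OF net] by auto
  have "acyclic ?R"
    using credal_networkD(3)[OF net] trancl_subset_Sigma[OF RG]
    unfolding acyclic_def strictly_below_def by blast
  then have "wf (?R\<inverse>)"
    using finite_acyclic_wf_converse finite_subset[OF RG] credal_networkD(1)[OF net] by blast
  then obtain s where s: "s \<in> G" "\<And>y. (y, s) \<in> ?R\<inverse> \<Longrightarrow> y \<notin> G"
    using wfE_min ne by (metis ex_in_conv)
  then show ?thesis using that unfolding dag_edges_def by blast
qed

lemma irr_ext_singleton_nonempty: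
  assumes net: "credal_network {s} Pa Xs M"
  shows "irr_ext {s} Pa Xs M \<noteq> {}"
proof -
  let ?W = "PiE {s} Xs"
  have "s \<notin> Pa s"
  proof
    assume "s \<in> Pa s"
    then have "(s, s) \<in> dag_edges {s} Pa" unfolding dag_edges_def by auto
    then show False using credal_networkD(3)[OF net] unfolding strictly_below_def by auto
  qed
  then have Pa_s: "Pa s = {}" using credal_networkD(2)[OF net] by blast
  have nondesc_s: "nondesc {s} Pa s = {}" unfolding nondesc_def by auto
  obtain m where m: "m \<in> M s (\<lambda>_. undefined)" "is_pmf_on (Xs s) m"
    using credal_networkD(6)[OF net, of s "\<lambda>_. undefined"] Pa_s by auto
  have m_nonneg: "0 \<le> m v" and m_out: "v \<notin> Xs s \<Longrightarrow> m v = 0" and m_sum: "sum m (Xs s) = 1" for v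
    using m(2) unfolding is_pmf_on_def by auto
  define e where "e v = (\<lambda>n\<in>{s}. v)" for v :: 'b
  have W: "?W = e ` Xs s" unfolding e_def PiE_over_singleton_iff by auto
  have inj: "inj_on e (Xs s)" unfolding e_def by (rule inj_onI) (metis restrict_apply' singletonI)
  define l where "l k z = (if k = (0::nat) then m (z s) else 1)" for k and z :: "'a \<Rightarrow> 'b"
  have fcp: "full_cond_prob ?W (lps_cond l)"
    by (rule full_cond_prob_lps_cond) (auto simp: l_def m_nonneg intro: exI[of _ 1] finite_PiE credal_networkD(4)[OF net])
  have "sum (l 0) ?W = 1" unfolding W sum.reindex[OF inj] using m_sum by (simp add: l_def e_def)
  then have val: "lps_cond l A ?W = sum (l 0) (A \<inter> ?W)" for A using lps_cond_eq[of 0 l ?W A] by simp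
  have local_dist: "(\<lambda>v. if v \<in> Xs s then lps_cond l {z \<in> ?W. z s = v} (cond_event ?W {} x) else 0) = m" for x
  proof
    fix v
    have "{z \<in> ?W. z s = v} \<inter> ?W = {e v}" if "v \<in> Xs s"
      using that unfolding W by (auto simp: e_def)
    then show "(if v \<in> Xs s then lps_cond l {z \<in> ?W. z s = v} (cond_event ?W {} x) else 0) = m v"
      by (simp add: cond_event_def val l_def e_def m_out)
  qed
  have "lps_cond l \<in> irr_ext {s} Pa Xs M"
    unfolding irr_ext_def
  proof (intro CollectI conjI ballI fcp)
    fix u x assume "u \<in> {s}"
    then have u: "u = s" by simp
    show "(\<lambda>v. if v \<in> Xs u then lps_cond l {z \<in> ?W. z u = v} (cond_event ?W (nondesc {s} Pa u) x) else 0)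
        \<in> M u (restrict x (Pa u))"
      unfolding u nondesc_s Pa_s local_dist using m(1) by (simp add: restrict_def)
  qed
  then show ?thesis by auto
qed

section \<open>Splitting a network into an ancestral part and the rest\<close>

locale network_split =
  fixes G T S :: "'n set" and Pa :: "'n \<Rightarrow> 'n set" and Xs :: "'n \<Rightarrow> 'v set"
    and M :: "'n \<Rightarrow> ('n \<Rightarrow> 'v) \<Rightarrow> ('v \<Rightarrow> real) set"
  assumes net: "credal_network G Pa Xs M"
    and disjoint_TS: "T \<inter> S = {}" and cover_TS: "T \<union> S = G" and parents_T: "\<forall>t\<in>T. Pa t \<subseteq> T"
begin

sublocale partitioned_space G T S Xs
  using disjoint_TS cover_TS credal_networkD(1,4,5)[OF net] by unfold_locales auto

abbreviation "D u \<equiv> descendants G Pa u"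
abbreviation "N u \<equiv> nondesc G Pa u"
abbreviation "NT u \<equiv> nondesc T (\<lambda>u. Pa u \<inter> T) u"
abbreviation "NS u \<equiv> nondesc S (\<lambda>u. Pa u \<inter> S) u"
abbreviation "MT \<equiv> \<lambda>u y. M u (restrict (\<lambda>t. if t \<in> T then y t else undefined) (Pa u))"
abbreviation "MSx x \<equiv> \<lambda>u y. M u (restrict (\<lambda>t. if t \<in> S then y t else restrict x (parents_of_set Pa S) t) (Pa u))"

lemma T_subset: "T \<subseteq> G" and S_subset: "S \<subseteq> G"
  using cover_TS by auto

lemma edge_into_T: "\<forall>a b. (a, b) \<in> dag_edges G Pa \<longrightarrow> b \<in> T \<longrightarrow> a \<in> T"
  using parents_T unfolding dag_edges_def by auto

lemma edge_from_S: "\<forall>a b. (a, b) \<in> dag_edges G Pa \<longrightarrow> a \<in> S \<longrightarrow> b \<in> S"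
proof (intro allI impI)
  fix a b assume ab: "(a, b) \<in> dag_edges G Pa" and a: "a \<in> S"
  then have "b \<in> G" "b \<in> T \<longrightarrow> a \<in> T" using edge_into_T unfolding dag_edges_def by auto
  then show "b \<in> S" using a disjoint_TS cover_TS by auto
qed

lemma descendants_T: "descendants T (\<lambda>u. Pa u \<inter> T) t = D t \<inter> T"
proof (intro set_eqI iffI)
  fix v assume "v \<in> descendants T (\<lambda>u. Pa u \<inter> T) t"
  then have tr: "(t, v) \<in> (dag_edges G Pa \<inter> T \<times> T)\<^sup>+"
    unfolding descendants_iff dag_edges_restrict[OF T_subset] .
  show "v \<in> D t \<inter> T" using trancl_Int_TimesD[OF tr] by (simp add: descendants_iff)
next
  fix v assume "v \<in> D t \<inter> T"
  then have "(t, v) \<in> (dag_edges G Pa)\<^sup>+" "v \<in> T" by (auto simp: descendants_iff)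
  then show "v \<in> descendants T (\<lambda>u. Pa u \<inter> T) t"
    unfolding descendants_iff dag_edges_restrict[OF T_subset]
    by (rule trancl_restrict_closed_backward[OF edge_into_T])
qed

lemma descendants_S:
  assumes "s \<in> S" shows "descendants S (\<lambda>u. Pa u \<inter> S) s = D s"
proof (intro set_eqI iffI)
  fix v assume "v \<in> descendants S (\<lambda>u. Pa u \<inter> S) s"
  then have tr: "(s, v) \<in> (dag_edges G Pa \<inter> S \<times> S)\<^sup>+"
    unfolding descendants_iff dag_edges_restrict[OF S_subset] .
  show "v \<in> D s" using trancl_Int_TimesD[OF tr] by (simp add: descendants_iff)
next
  fix v assume "v \<in> D s"
  then show "v \<in> descendants S (\<lambda>u. Pa u \<inter> S) s"
    unfolding descendants_iff dag_edges_restrict[OF S_subset]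
    using trancl_restrict_closed_forward[OF edge_from_S] assms by blast
qed

lemma descendants_S_subset: "s \<in> S \<Longrightarrow> D s \<subseteq> S"
  using trancl_restrict_closed_forward[OF edge_from_S] by (auto simp: descendants_iff)

lemma nondesc_T: "t \<in> T \<Longrightarrow> NT t = N t \<inter> T"
  unfolding nondesc_def using descendants_T T_subset by auto

lemma nondesc_S:
  assumes "s \<in> S" shows "N s = T \<union> NS s"
proof -
  have "D s \<subseteq> S" "descendants S (\<lambda>u. Pa u \<inter> S) s = D s"
    using descendants_S_subset descendants_S assms by auto
  then show ?thesis unfolding nondesc_def using assms disjoint_TS cover_TS by blast
qed

lemma NT_subset: "NT t \<subseteq> T" and NS_subset: "NS s \<subseteq> S"
  unfolding nondesc_def by auto

lemma nondesc_T_above: "t \<in> T \<Longrightarrow> S \<subseteq> D t \<Longrightarrow> N t = NT t"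
  unfolding nondesc_T[of t] unfolding nondesc_def using cover_TS by auto

lemma nondesc_T_apart: "t \<in> T \<Longrightarrow> S \<inter> D t = {} \<Longrightarrow> N t = NT t \<union> S"
  unfolding nondesc_T[of t] unfolding nondesc_def using cover_TS disjoint_TS by auto

lemma cond_event_S:
  "s \<in> S \<Longrightarrow> cond_event XG (N s) x = sigma_event {restrict x T} (\<lambda>_. cond_event XS (NS s) x)"
  unfolding cond_event_def sigma_event_def nondesc_S
  using NS_subset[of s] restrict_S_in by (auto simp: fun_eq_iff)

lemma cond_event_NT_Int:
  assumes "\<forall>z\<in>XG. z \<in> C \<longleftrightarrow> restrict z S \<in> W"
  shows "cond_event XG (NT t) x \<inter> C = sigma_event (cond_event XT (NT t) x) (\<lambda>_. W)"
proof -
  have eq: "z \<in> cond_event XG (NT t) x \<longleftrightarrow> restrict z T \<in> cond_event XT (NT t) x" if "z \<in> XG" for z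
    using that restrict_T_in NT_subset[of t] unfolding cond_event_def by auto
  have sub: "cond_event XG (NT t) x \<subseteq> XG" unfolding cond_event_def by auto
  show ?thesis
  proof (rule set_eqI)
    fix z
    show "z \<in> cond_event XG (NT t) x \<inter> C \<longleftrightarrow> z \<in> sigma_event (cond_event XT (NT t) x) (\<lambda>_. W)"
      using eq[of z] assms sub unfolding sigma_event_def by (cases "z \<in> XG") auto
  qed
qed

lemma cond_event_NT: "cond_event XG (NT t) x = sigma_event (cond_event XT (NT t) x) (\<lambda>_. XS)"
  using cond_event_NT_Int[of XG XS t x] restrict_S_in by (simp add: Int_absorb2 cond_event_def)

lemma cond_event_NT_Un_S:
  "cond_event XG (NT t \<union> S) x = sigma_event (cond_event XT (NT t) x) (\<lambda>_. {restrict x S})"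
proof -
  have "cond_event XG (NT t \<union> S) x = cond_event XG (NT t) x \<inter> cond_event XG S x"
    unfolding cond_event_def by auto
  moreover have "z \<in> cond_event XG S x \<longleftrightarrow> restrict z S \<in> {restrict x S}" if "z \<in> XG" for z
    using that unfolding cond_event_def by (auto simp: fun_eq_iff restrict_def)
  ultimately show ?thesis using cond_event_NT_Int by simp
qed

lemma value_event_T: "t \<in> T \<Longrightarrow> {z \<in> XG. z t = v} = sigma_event {w \<in> XT. w t = v} (\<lambda>_. XS)"
  unfolding sigma_event_def using restrict_T_in restrict_S_in by auto

lemma value_event_S:
  "s \<in> S \<Longrightarrow> {z \<in> XG. z s = v} \<inter> sigma_event E (\<lambda>_. C) = sigma_event E (\<lambda>_. {y \<in> XS. y s = v} \<inter> C)"
  unfolding sigma_event_def using restrict_S_in by auto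

lemma local_model_T:
  assumes "t \<in> T" shows "MT t (restrict x (Pa t \<inter> T)) = M t (restrict x (Pa t))"
proof -
  have "restrict (\<lambda>u. if u \<in> T then restrict x (Pa t \<inter> T) u else undefined) (Pa t) = restrict x (Pa t)"
    using parents_T assms by (auto simp: fun_eq_iff restrict_def)
  then show ?thesis by simp
qed

lemma local_model_S:
  assumes s: "s \<in> S"
  shows "MSx (restrict x T) s (restrict (restrict x (NS s)) (Pa s \<inter> S)) = M s (restrict x (Pa s))"
proof -
  have "t \<in> N s" if "t \<in> Pa s" for t
    using parent_in_nondesc[OF net _ that] s S_subset by blast
  moreover have "t \<in> T" if "t \<in> Pa s" "t \<notin> S" for t
    using that credal_networkD(2)[OF net] s S_subset cover_TS by blast
  ultimately have "restrict (\<lambda>t. if t \<in> S then restrict (restrict x (NS s)) (Pa s \<inter> S) t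
      else restrict (restrict x T) (parents_of_set Pa S) t) (Pa s) = restrict x (Pa s)"
    using nondesc_S[OF s] disjoint_TS s unfolding parents_of_set_def by (auto simp: fun_eq_iff)
  then show ?thesis by simp
qed

lemma credal_network_T: "credal_network T (\<lambda>u. Pa u \<inter> T) Xs MT"
  using credal_network_restrict[OF net T_subset, of "\<lambda>_. undefined"] parents_T by auto

lemma credal_network_S: "x \<in> XT \<Longrightarrow> credal_network S (\<lambda>u. Pa u \<inter> S) Xs (MSx x)"
  using credal_networkD(2)[OF net] S_subset cover_TS
  by (intro credal_network_restrict[OF net S_subset]) (auto simp: parents_of_set_def)

lemma restrict_parents_S_eq:
  assumes t: "t \<in> T" and apart: "S \<inter> D t = {}" and agree: "\<forall>u\<in>NT t. x u = x' u"
  shows "restrict x (parents_of_set Pa S) = restrict x' (parents_of_set Pa S)"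
proof -
  have "p \<in> NT t" if p: "p \<in> parents_of_set Pa S" for p
  proof -
    obtain s where s: "s \<in> S" "p \<in> Pa s" "p \<notin> S" using p unfolding parents_of_set_def by blast
    then have e: "(p, s) \<in> dag_edges G Pa" using S_subset unfolding dag_edges_def by auto
    have pT: "p \<in> T" using s credal_networkD(2)[OF net] S_subset cover_TS by blast
    have "p \<noteq> t" "p \<notin> D t"
      using e s(1) apart trancl_into_trancl[OF _ e] by (auto simp: descendants_iff)
    then show "p \<in> NT t" using pT T_subset nondesc_T[OF t] unfolding nondesc_def by auto
  qed
  then show ?thesis using agree by (auto simp: fun_eq_iff restrict_def)
qed

definition marginal :: "(('n \<Rightarrow> 'v) set \<Rightarrow> ('n \<Rightarrow> 'v) set \<Rightarrow> real) \<Rightarrow> ('n \<Rightarrow> 'v) set \<Rightarrow> ('n \<Rightarrow> 'v) set \<Rightarrow> real"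
  where "marginal P A B = P (sigma_event A (\<lambda>_. XS)) (sigma_event B (\<lambda>_. XS))"

definition conditional ::
    "(('n \<Rightarrow> 'v) set \<Rightarrow> ('n \<Rightarrow> 'v) set \<Rightarrow> real) \<Rightarrow> ('n \<Rightarrow> 'v) \<Rightarrow> ('n \<Rightarrow> 'v) set \<Rightarrow> ('n \<Rightarrow> 'v) set \<Rightarrow> real"
  where "conditional P x A B = P (sigma_event {x} (\<lambda>_. A)) (sigma_event {x} (\<lambda>_. B))"

lemma cond_event_S_nonempty: "u \<in> S \<Longrightarrow> xS \<in> PiE (NS u) Xs \<Longrightarrow> cond_event XS (NS u) xS \<noteq> {}"
  using cond_event_nonempty[OF NS_subset, of xS u] finite_states S_subset by blast

lemma local_value_S:
  assumes P: "full_cond_prob XG P" and u: "u \<in> S" and x': "x' \<in> PiE (N u) Xs"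
  shows "P {z \<in> XG. z u = v} (cond_event XG (N u) x') =
    conditional P (restrict x' T) {y \<in> XS. y u = v} (cond_event XS (NS u) (restrict x' (NS u)))"
proof -
  define x C where "x = restrict x' T" and "C = cond_event XS (NS u) (restrict x' (NS u))"
  have x: "x \<in> XT" and xS: "restrict x' (NS u) \<in> PiE (NS u) Xs"
    unfolding x_def using x' nondesc_S[OF u] by (auto intro: restrict_PiE_subset)
  have C: "C \<subseteq> XS" "C \<noteq> {}"
    unfolding C_def using cond_event_S_nonempty[OF u xS] by (auto simp: cond_event_def)
  let ?B = "sigma_event {x} (\<lambda>_. C)"
  have B: "?B \<subseteq> XG" "?B \<noteq> {}"
    using sigma_event_subset sigma_event_nonempty[of x "{x}"] x C by auto
  have "cond_event XG (N u) x' = ?B"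
    unfolding x_def C_def cond_event_restrict[OF order_refl] by (rule cond_event_S[OF u])
  moreover have "P {z \<in> XG. z u = v} ?B = P (sigma_event {x} (\<lambda>_. {y \<in> XS. y u = v} \<inter> C)) ?B"
    using full_cond_prob_Int_cond[OF P _ B] unfolding value_event_S[OF u, symmetric] by simp
  moreover have "sigma_event {x} (\<lambda>_. {y \<in> XS. y u = v} \<inter> C) = sigma_event {x} (\<lambda>_. {y \<in> XS. y u = v}) \<inter> ?B"
    unfolding sigma_event_Int by simp
  moreover have "P (sigma_event {x} (\<lambda>_. {y \<in> XS. y u = v}) \<inter> ?B) ?B = conditional P x {y \<in> XS. y u = v} C"
    unfolding conditional_def by (rule full_cond_prob_Int_cond[OF P sigma_event_subset B])
  ultimately show ?thesis unfolding x_def C_def by simp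
qed

end

text \<open>The dichotomy above_or_apart is what makes the glued system satisfy the irrelevance
  condition at the nodes of T.\<close>
locale irr_combination = network_split G T S Pa Xs M
  for G T S :: "'n set" and Pa :: "'n \<Rightarrow> 'n set" and Xs :: "'n \<Rightarrow> 'v set"
    and M :: "'n \<Rightarrow> ('n \<Rightarrow> 'v) \<Rightarrow> ('v \<Rightarrow> real) set" +
  fixes PT :: "('n \<Rightarrow> 'v) set \<Rightarrow> ('n \<Rightarrow> 'v) set \<Rightarrow> real"
    and Q :: "('n \<Rightarrow> 'v) \<Rightarrow> ('n \<Rightarrow> 'v) set \<Rightarrow> ('n \<Rightarrow> 'v) set \<Rightarrow> real"
  assumes PT_irr: "PT \<in> irr_ext T (\<lambda>u. Pa u \<inter> T) Xs MT"
    and Q_irr: "\<forall>x\<in>XT. Q x \<in> irr_ext S (\<lambda>u. Pa u \<inter> S) Xs (MSx x)"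
    and above_or_apart: "\<forall>t\<in>T. S \<subseteq> D t \<or>
      (S \<inter> D t = {} \<and> (\<forall>x\<in>XT. \<forall>x'\<in>XT. (\<forall>u\<in>NT t. x u = x' u) \<longrightarrow> Q x = Q x'))"
begin

sublocale fcp_combination G T S Xs PT Q
  using irr_extD(1)[OF PT_irr] Q_irr by unfold_locales (auto intro: irr_extD(1))

lemma comb_local_model_S:
  assumes u: "u \<in> S" and x': "x' \<in> PiE (N u) Xs"
  shows "(\<lambda>v. if v \<in> Xs u then comb {z \<in> XG. z u = v} (cond_event XG (N u) x') else 0)
    \<in> M u (restrict x' (Pa u))"
proof -
  define xT xS where "xT = restrict x' T" and "xS = restrict x' (NS u)"
  have xT: "xT \<in> XT" and xS: "xS \<in> PiE (NS u) Xs"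
    unfolding xT_def xS_def using x' nondesc_S[OF u] by (auto intro: restrict_PiE_subset)
  have cond: "conditional comb xT {y \<in> XS. y u = v} (cond_event XS (NS u) xS) =
      Q xT {y \<in> XS. y u = v} (cond_event XS (NS u) xS)" for v
    unfolding conditional_def using xT cond_event_S_nonempty[OF u xS]
    by (intro comb_conditional) (auto simp: cond_event_def)
  have model: "M u (restrict x' (Pa u)) = MSx xT u (restrict xS (Pa u \<inter> S))"
    unfolding xT_def xS_def by (rule local_model_S[OF u, symmetric])
  show ?thesis
    unfolding local_value_S[OF full_cond_prob_comb u x'] xT_def[symmetric] xS_def[symmetric] cond model
    using irr_extD(2)[of "Q xT"] Q_irr xT u xS by blast
qed

lemma comb_value_T:
  assumes u: "u \<in> T" and x': "x' \<in> PiE (N u) Xs"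
  shows "comb {z \<in> XG. z u = v} (cond_event XG (N u) x') = PT {w \<in> XT. w u = v} (cond_event XT (NT u) x')"
proof -
  define E where "E = cond_event XT (NT u) x'"
  have xN: "restrict x' (NT u) \<in> PiE (NT u) Xs"
    using x' nondesc_T[OF u] by (auto intro: restrict_PiE_subset)
  have E: "E \<subseteq> XT" "E \<noteq> {}"
    unfolding E_def cond_event_restrict[OF order_refl, of _ "NT u" x', symmetric]
    using cond_event_nonempty[OF NT_subset xN] finite_states T_subset by (auto simp: cond_event_def)
  show ?thesis
  proof (cases "S \<subseteq> D u")
    case True
    show ?thesis
      unfolding nondesc_T_above[OF u True] cond_event_NT value_event_T[OF u] E_def[symmetric]
      using E by (intro comb_marginal) auto
  next
    case False
    then have apart: "S \<inter> D u = {}"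
      and Q_nondesc: "\<forall>x\<in>XT. \<forall>x''\<in>XT. (\<forall>w\<in>NT u. x w = x'' w) \<longrightarrow> Q x = Q x''"
      using above_or_apart u by auto
    have Q_const: "\<forall>x\<in>E. \<forall>x''\<in>E. Q x = Q x''"
    proof (intro ballI)
      fix x1 x2 assume "x1 \<in> E" "x2 \<in> E"
      then have "x1 \<in> XT" "x2 \<in> XT" "\<forall>w\<in>NT u. x1 w = x2 w" unfolding E_def cond_event_def by auto
      then show "Q x1 = Q x2" using Q_nondesc by blast
    qed
    have "restrict x' S \<in> XS" using x' nondesc_T_apart[OF u apart] by (auto intro: restrict_PiE_subset)
    then show ?thesis
      unfolding nondesc_T_apart[OF u apart] cond_event_NT_Un_S value_event_T[OF u] E_def[symmetric]
      by (intro comb_marginal_given[OF _ E _ _ Q_const]) auto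
  qed
qed

lemma comb_local_model_T:
  assumes u: "u \<in> T" and x': "x' \<in> PiE (N u) Xs"
  shows "(\<lambda>v. if v \<in> Xs u then comb {z \<in> XG. z u = v} (cond_event XG (N u) x') else 0)
    \<in> M u (restrict x' (Pa u))"
proof -
  define xN where "xN = restrict x' (NT u)"
  have xN: "xN \<in> PiE (NT u) Xs" unfolding xN_def using x' nondesc_T[OF u] by (auto intro: restrict_PiE_subset)
  have "Pa u \<subseteq> NT u"
    using parent_in_nondesc[OF net] parents_T T_subset u nondesc_T[OF u] by blast
  then have "restrict xN (Pa u) = restrict x' (Pa u)"
    unfolding xN_def by (auto simp: fun_eq_iff restrict_def)
  then have "(\<lambda>v. if v \<in> Xs u then PT {w \<in> XT. w u = v} (cond_event XT (NT u) xN) else 0)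
      \<in> M u (restrict x' (Pa u))"
    using irr_extD(2)[OF PT_irr u xN] unfolding local_model_T[OF u] by simp
  then show ?thesis
    unfolding comb_value_T[OF u x'] xN_def cond_event_restrict[OF order_refl] .
qed

lemma comb_irr_ext: "comb \<in> irr_ext G Pa Xs M"
  unfolding irr_ext_def
  using full_cond_prob_comb comb_local_model_S comb_local_model_T cover_TS by blast

end

lemma (in network_split) irr_ext_product:
  assumes "PT \<in> irr_ext T (\<lambda>u. Pa u \<inter> T) Xs MT"
    and "\<forall>x\<in>XT. Q x \<in> irr_ext S (\<lambda>u. Pa u \<inter> S) Xs (MSx x)"
    and "\<forall>t\<in>T. S \<subseteq> D t \<or> (S \<inter> D t = {} \<and> (\<forall>x\<in>XT. \<forall>x'\<in>XT. (\<forall>u\<in>NT t. x u = x' u) \<longrightarrow> Q x = Q x'))"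
  obtains P where "P \<in> irr_ext G Pa Xs M" "\<forall>x\<in>XT. \<forall>y\<in>XS. P {join x y} XG = PT {x} XT * Q x {y} XS"
proof -
  interpret irr_combination G T S Pa Xs M PT Q
    using assms by unfold_locales auto
  show ?thesis using that comb_irr_ext comb_point by blast
qed

lemma irr_ext_nonempty:
  assumes "credal_network G Pa Xs M"
  shows "irr_ext G Pa Xs M \<noteq> {}"
  using assms
proof (induction "card G" arbitrary: G Pa M rule: less_induct)
  case less
  note net = less.prems
  show ?case
  proof (cases "G = {}")
    case True
    have "full_cond_prob (PiE G Xs) (lps_cond (\<lambda>_ _. 1))"
      by (rule full_cond_prob_lps_cond) (auto simp: True)
    then show ?thesis unfolding irr_ext_def True by auto
  next
    case False
    obtain s where s: "s \<in> G" and sink: "\<forall>t\<in>G. s \<notin> Pa t"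
      by (rule credal_network_sink[OF net False])
    define T where "T = G - {s}"
    have "\<forall>t\<in>T. Pa t \<subseteq> T" unfolding T_def using sink credal_networkD(2)[OF net] by blast
    then interpret network_split G T "{s}" Pa Xs M
      using net s unfolding T_def by unfold_locales auto
    obtain PT where PT: "PT \<in> irr_ext T (\<lambda>u. Pa u \<inter> T) Xs MT"
      using less.hyps[OF _ credal_network_T] s credal_networkD(1)[OF net]
      unfolding T_def by (meson card_Diff1_less ex_in_conv)
    define Q where "Q x = (SOME Q. Q \<in> irr_ext {s} (\<lambda>u. Pa u \<inter> {s}) Xs (MSx x))" for x
    have Q: "\<forall>x\<in>XT. Q x \<in> irr_ext {s} (\<lambda>u. Pa u \<inter> {s}) Xs (MSx x)"
      using irr_ext_singleton_nonempty[OF credal_network_S] unfolding Q_def by (simp add: some_in_eq)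
    have "\<forall>t\<in>T. {s} \<subseteq> D t \<or> ({s} \<inter> D t = {} \<and>
        (\<forall>x\<in>XT. \<forall>x'\<in>XT. (\<forall>u\<in>NT t. x u = x' u) \<longrightarrow> Q x = Q x'))"
    proof (intro ballI)
      fix t assume t: "t \<in> T"
      have "Q x = Q x'" if "{s} \<inter> D t = {}" "\<forall>u\<in>NT t. x u = x' u" for x x'
        unfolding Q_def restrict_parents_S_eq[OF t that] ..
      then show "{s} \<subseteq> D t \<or> ({s} \<inter> D t = {} \<and>
          (\<forall>x\<in>XT. \<forall>x'\<in>XT. (\<forall>u\<in>NT t. x u = x' u) \<longrightarrow> Q x = Q x'))"
        by (cases "s \<in> D t") auto
    qed
    then obtain P where "P \<in> irr_ext G Pa Xs M" by (rule irr_ext_product[OF PT Q])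
    then show ?thesis by auto
  qed
qed

section \<open>Lower expectations\<close>

definition expectation :: "'w set \<Rightarrow> ('w set \<Rightarrow> 'w set \<Rightarrow> real) \<Rightarrow> ('w \<Rightarrow> real) \<Rightarrow> real" where
  "expectation \<Omega> P h = (\<Sum>z\<in>\<Omega>. h z * P {z} \<Omega>)"

lemma lower_exp_irr_eq_Inf:
  "lower_exp_irr G Pa Xs M f = Inf ((\<lambda>P. expectation (PiE G Xs) P f) ` irr_ext G Pa Xs M)"
  unfolding lower_exp_irr_def expectation_def by (simp add: Setcompr_eq_image)

lemma expectation_mono:
  assumes "full_cond_prob \<Omega> P" "finite \<Omega>" "\<And>z. z \<in> \<Omega> \<Longrightarrow> h z \<le> h' z"
  shows "expectation \<Omega> P h \<le> expectation \<Omega> P h'"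
  unfolding expectation_def using full_cond_prob_singleton_bounds(1)[OF assms(1,2)] assms(3)
  by (intro sum_mono mult_right_mono) auto

lemma expectation_add_const:
  assumes "full_cond_prob \<Omega> P" "finite \<Omega>" "\<Omega> \<noteq> {}"
  shows "expectation \<Omega> P (\<lambda>z. h z + c) = expectation \<Omega> P h + c"
  using full_cond_prob_sum_singletons_eq_1[OF assms] unfolding expectation_def
  by (simp add: distrib_right sum.distrib sum_distrib_left[symmetric])

lemma bdd_below_expectation:
  assumes fin: "finite \<Omega>" and F: "\<forall>P\<in>F. full_cond_prob \<Omega> P"
  shows "bdd_below ((\<lambda>P. expectation \<Omega> P h) ` F)"
proof (rule bdd_belowI2)
  fix P assume "P \<in> F"
  then have P: "full_cond_prob \<Omega> P" using F by blast
  have "- \<bar>h z\<bar> \<le> h z * P {z} \<Omega>" if "z \<in> \<Omega>" for z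
  proof -
    have "\<bar>h z * P {z} \<Omega>\<bar> \<le> \<bar>h z\<bar>"
      using full_cond_prob_singleton_bounds[OF P fin that] by (simp add: abs_mult mult_left_le)
    then show ?thesis by linarith
  qed
  then show "(\<Sum>z\<in>\<Omega>. - \<bar>h z\<bar>) \<le> expectation \<Omega> P h"
    unfolding expectation_def by (rule sum_mono)
qed

lemma Inf_image_eq_approx:
  fixes a :: "'a \<Rightarrow> real" and b :: "'b \<Rightarrow> real"
  assumes "A \<noteq> {}" "B \<noteq> {}" "bdd_below (a ` A)" "bdd_below (b ` B)"
    and below: "\<forall>x\<in>A. \<exists>y\<in>B. b y \<le> a x"
    and approx: "\<forall>y\<in>B. \<forall>e>0. \<exists>x\<in>A. a x \<le> b y + e"
  shows "Inf (a ` A) = Inf (b ` B)"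
proof (rule antisym)
  show "Inf (a ` A) \<le> Inf (b ` B)"
  proof (rule cINF_greatest[OF assms(2)])
    fix y assume y: "y \<in> B"
    show "Inf (a ` A) \<le> b y"
    proof (rule field_le_epsilon)
      fix e :: real assume "0 < e"
      then obtain x where "x \<in> A" "a x \<le> b y + e" using approx y by blast
      then show "Inf (a ` A) \<le> b y + e" using cINF_lower[OF assms(3)] by fastforce
    qed
  qed
  show "Inf (b ` B) \<le> Inf (a ` A)"
  proof (rule cINF_greatest[OF assms(1)])
    fix x assume "x \<in> A"
    then obtain y where "y \<in> B" "b y \<le> a x" using below by blast
    then show "Inf (b ` B) \<le> a x" using cINF_lower[OF assms(4)] by fastforce
  qed
qed

context network_split
begin

lemma full_cond_prob_marginal:
  assumes P: "full_cond_prob XG P"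
  shows "full_cond_prob XT (marginal P)"
  unfolding marginal_def
proof (rule full_cond_prob_comp_event_map[OF P sigma_event_subset])
  fix B assume "B \<subseteq> XT" "B \<noteq> {}"
  then obtain x y where "x \<in> B" "y \<in> XS" using XS_nonempty by blast
  then show "sigma_event B (\<lambda>_. XS) \<noteq> {}"
    using sigma_event_nonempty[of x B y] \<open>B \<subseteq> XT\<close> by simp
qed (auto simp: sigma_event_def)

lemma full_cond_prob_conditional:
  assumes P: "full_cond_prob XG P" and x: "x \<in> XT"
  shows "full_cond_prob XS (conditional P x)"
  unfolding conditional_def
proof (rule full_cond_prob_comp_event_map[OF P sigma_event_subset])
  fix B assume "B \<subseteq> XS" "B \<noteq> {}"
  then obtain y where "y \<in> B" by blast
  then show "sigma_event {x} (\<lambda>_. B) \<noteq> {}"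
    using sigma_event_nonempty[of x "{x}" y] x \<open>B \<subseteq> XS\<close> by simp
qed (auto simp: sigma_event_def)

lemma marginal_irr_ext:
  assumes S_below: "\<forall>t\<in>T. S \<subseteq> D t" and P: "P \<in> irr_ext G Pa Xs M"
  shows "marginal P \<in> irr_ext T (\<lambda>u. Pa u \<inter> T) Xs MT"
  unfolding irr_ext_def
proof (intro CollectI conjI ballI full_cond_prob_marginal[OF irr_extD(1)[OF P]])
  fix u x assume u: "u \<in> T" and x: "x \<in> PiE (NT u) Xs"
  have N: "N u = NT u" using nondesc_T_above[OF u] S_below u by blast
  have "(\<lambda>v. if v \<in> Xs u then P {z \<in> XG. z u = v} (cond_event XG (N u) x) else 0) \<in> M u (restrict x (Pa u))"
    using irr_extD(2)[OF P] u x T_subset N by auto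
  then show "(\<lambda>v. if v \<in> Xs u then marginal P {z \<in> XT. z u = v} (cond_event XT (NT u) x) else 0)
      \<in> MT u (restrict x (Pa u \<inter> T))"
    unfolding marginal_def N cond_event_NT value_event_T[OF u] local_model_T[OF u] .
qed

lemma conditional_irr_ext:
  assumes P: "P \<in> irr_ext G Pa Xs M" and x: "x \<in> XT"
  shows "conditional P x \<in> irr_ext S (\<lambda>u. Pa u \<inter> S) Xs (MSx x)"
  unfolding irr_ext_def
proof (intro CollectI conjI ballI full_cond_prob_conditional[OF irr_extD(1)[OF P] x])
  fix u xS assume u: "u \<in> S" and xS: "xS \<in> PiE (NS u) Xs"
  define x' where "x' = restrict (join x xS) (N u)"
  have x': "x' \<in> PiE (N u) Xs"
    unfolding x'_def nondesc_S[OF u] using x xS NS_subset[of u] disjoint_TS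
    by (auto simp: PiE_def Pi_def join_def)
  have x'_T: "restrict x' T = x"
    unfolding x'_def nondesc_S[OF u] using x disjoint_TS
    by (auto simp: fun_eq_iff join_def PiE_def extensional_def)
  have x'_S: "restrict x' (NS u) = xS"
    unfolding x'_def nondesc_S[OF u] using xS NS_subset[of u]
    by (auto simp: fun_eq_iff join_def PiE_def extensional_def)
  have "(\<lambda>v. if v \<in> Xs u then P {z \<in> XG. z u = v} (cond_event XG (N u) x') else 0) \<in> M u (restrict x' (Pa u))"
    using irr_extD(2)[OF P _ x'] u S_subset by auto
  moreover have "MSx x u (restrict xS (Pa u \<inter> S)) = M u (restrict x' (Pa u))"
    using local_model_S[OF u, of x'] unfolding x'_T x'_S .
  ultimately show "(\<lambda>v. if v \<in> Xs u then conditional P x {z \<in> XS. z u = v} (cond_event XS (NS u) xS) else 0)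
      \<in> MSx x u (restrict xS (Pa u \<inter> S))"
    unfolding local_value_S[OF irr_extD(1)[OF P] u x'] x'_T x'_S by simp
qed

lemma expectation_product:
  assumes "\<forall>x\<in>XT. \<forall>y\<in>XS. P {join x y} XG = PT {x} XT * Q x {y} XS"
  shows "expectation XG P f = expectation XT PT (\<lambda>x. expectation XS (Q x) (\<lambda>y. f (join x y)))"
proof -
  have "expectation XG P f = (\<Sum>x\<in>XT. \<Sum>y\<in>XS. f (join x y) * P {join x y} XG)"
    unfolding expectation_def using sum_sigma_event[of XT "\<lambda>_. XS"] sigma_event_univ by simp
  also have "\<dots> = (\<Sum>x\<in>XT. (\<Sum>y\<in>XS. f (join x y) * Q x {y} XS) * PT {x} XT)"
  proof (intro sum.cong refl)
    fix x assume x: "x \<in> XT"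
    then have "(\<Sum>y\<in>XS. f (join x y) * P {join x y} XG) = (\<Sum>y\<in>XS. f (join x y) * Q x {y} XS * PT {x} XT)"
      using assms by (intro sum.cong refl) simp
    then show "(\<Sum>y\<in>XS. f (join x y) * P {join x y} XG) = (\<Sum>y\<in>XS. f (join x y) * Q x {y} XS) * PT {x} XT"
      by (simp add: sum_distrib_right)
  qed
  finally show ?thesis unfolding expectation_def .
qed

lemma expectation_split:
  assumes P: "full_cond_prob XG P"
  shows "expectation XG P f =
    expectation XT (marginal P) (\<lambda>x. expectation XS (conditional P x) (\<lambda>y. f (join x y)))"
proof (rule expectation_product, intro ballI)
  fix x y assume "x \<in> XT" "y \<in> XS"
  then show "P {join x y} XG = marginal P {x} XT * conditional P x {y} XS"
    using full_cond_prob_point_chain[OF P] by (simp add: marginal_def conditional_def sigma_event_univ)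
qed

definition cond_lower_exp :: "(('n \<Rightarrow> 'v) \<Rightarrow> real) \<Rightarrow> ('n \<Rightarrow> 'v) \<Rightarrow> real" where
  "cond_lower_exp f x = lower_exp_irr S (\<lambda>u. Pa u \<inter> S) Xs (MSx x) (\<lambda>y. f (join x y))"

lemma cond_lower_exp_eq_Inf:
  "cond_lower_exp f x =
    Inf ((\<lambda>Q. expectation XS Q (\<lambda>y. f (join x y))) ` irr_ext S (\<lambda>u. Pa u \<inter> S) Xs (MSx x))"
  unfolding cond_lower_exp_def lower_exp_irr_eq_Inf ..

lemma cond_lower_exp_le:
  assumes "Q \<in> irr_ext S (\<lambda>u. Pa u \<inter> S) Xs (MSx x)"
  shows "cond_lower_exp f x \<le> expectation XS Q (\<lambda>y. f (join x y))"
  unfolding cond_lower_exp_eq_Inf using assms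
  by (intro cINF_lower bdd_below_expectation[OF finite_XS]) (auto dest: irr_extD(1))

lemma cond_lower_exp_approx:
  assumes x: "x \<in> XT" and e: "0 < e"
  shows "\<exists>Q\<in>irr_ext S (\<lambda>u. Pa u \<inter> S) Xs (MSx x).
    expectation XS Q (\<lambda>y. f (join x y)) < cond_lower_exp f x + e"
proof -
  have "irr_ext S (\<lambda>u. Pa u \<inter> S) Xs (MSx x) \<noteq> {}" by (rule irr_ext_nonempty[OF credal_network_S[OF x]])
  then show ?thesis
    using cInf_lessD[of "(\<lambda>Q. expectation XS Q (\<lambda>y. f (join x y))) ` irr_ext S (\<lambda>u. Pa u \<inter> S) Xs (MSx x)"
        "cond_lower_exp f x + e"] e
    unfolding cond_lower_exp_eq_Inf[symmetric] by auto
qed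

lemma expectation_marginal_le:
  assumes P: "P \<in> irr_ext G Pa Xs M"
  shows "expectation XT (marginal P) (cond_lower_exp f) \<le> expectation XG P f"
proof -
  have Pf: "full_cond_prob XG P" by (rule irr_extD(1)[OF P])
  show ?thesis
    unfolding expectation_split[OF Pf]
    by (intro expectation_mono[OF full_cond_prob_marginal[OF Pf] finite_XT] cond_lower_exp_le
        conditional_irr_ext[OF P])
qed

lemma irr_ext_approx:
  assumes S_below: "\<forall>t\<in>T. S \<subseteq> D t" and PT: "PT \<in> irr_ext T (\<lambda>u. Pa u \<inter> T) Xs MT" and e: "0 < e"
  shows "\<exists>P\<in>irr_ext G Pa Xs M. expectation XG P f \<le> expectation XT PT (cond_lower_exp f) + e"
proof -
  have "\<forall>x\<in>XT. \<exists>Q. Q \<in> irr_ext S (\<lambda>u. Pa u \<inter> S) Xs (MSx x) \<and>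
      expectation XS Q (\<lambda>y. f (join x y)) < cond_lower_exp f x + e"
    using cond_lower_exp_approx[OF _ e] by blast
  then obtain Q where Q: "\<forall>x\<in>XT. Q x \<in> irr_ext S (\<lambda>u. Pa u \<inter> S) Xs (MSx x) \<and>
      expectation XS (Q x) (\<lambda>y. f (join x y)) < cond_lower_exp f x + e"
    by (auto dest!: bchoice)
  then have "\<forall>x\<in>XT. Q x \<in> irr_ext S (\<lambda>u. Pa u \<inter> S) Xs (MSx x)" by blast
  moreover have "\<forall>t\<in>T. S \<subseteq> D t \<or> (S \<inter> D t = {} \<and>
      (\<forall>x\<in>XT. \<forall>x'\<in>XT. (\<forall>u\<in>NT t. x u = x' u) \<longrightarrow> Q x = Q x'))"
    using S_below by blast
  ultimately obtain P where P: "P \<in> irr_ext G Pa Xs M"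
    and point: "\<forall>x\<in>XT. \<forall>y\<in>XS. P {join x y} XG = PT {x} XT * Q x {y} XS"
    by (rule irr_ext_product[OF PT])
  have PTf: "full_cond_prob XT PT" by (rule irr_extD(1)[OF PT])
  have "expectation XG P f = expectation XT PT (\<lambda>x. expectation XS (Q x) (\<lambda>y. f (join x y)))"
    using point by (rule expectation_product)
  also have "\<dots> \<le> expectation XT PT (\<lambda>x. cond_lower_exp f x + e)"
    using Q by (intro expectation_mono[OF PTf finite_XT]) (auto intro: less_imp_le)
  also have "\<dots> = expectation XT PT (cond_lower_exp f) + e"
    by (rule expectation_add_const[OF PTf finite_XT XT_nonempty])
  finally show ?thesis using P by blast
qed

lemma lower_exp_irr_iterated:
  assumes S_below: "\<forall>t\<in>T. S \<subseteq> D t"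
  shows "lower_exp_irr G Pa Xs M f = lower_exp_irr T (\<lambda>u. Pa u \<inter> T) Xs MT (cond_lower_exp f)"
  unfolding lower_exp_irr_eq_Inf
proof (rule Inf_image_eq_approx)
  show "irr_ext G Pa Xs M \<noteq> {}" "irr_ext T (\<lambda>u. Pa u \<inter> T) Xs MT \<noteq> {}"
    using irr_ext_nonempty net credal_network_T by blast+
  show "bdd_below ((\<lambda>P. expectation XG P f) ` irr_ext G Pa Xs M)"
    "bdd_below ((\<lambda>P. expectation XT P (cond_lower_exp f)) ` irr_ext T (\<lambda>u. Pa u \<inter> T) Xs MT)"
    by (auto intro!: bdd_below_expectation finite_XG finite_XT dest: irr_extD(1))
  show "\<forall>P\<in>irr_ext G Pa Xs M. \<exists>PT\<in>irr_ext T (\<lambda>u. Pa u \<inter> T) Xs MT.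
      expectation XT PT (cond_lower_exp f) \<le> expectation XG P f"
    using marginal_irr_ext[OF S_below] expectation_marginal_le by blast
  show "\<forall>PT\<in>irr_ext T (\<lambda>u. Pa u \<inter> T) Xs MT. \<forall>e>0. \<exists>P\<in>irr_ext G Pa Xs M.
      expectation XG P f \<le> expectation XT PT (cond_lower_exp f) + e"
    using irr_ext_approx[OF S_below] by blast
qed

end

lemma parents_outside_if_below:
  assumes net: "credal_network G Pa Xs M" and order: "\<forall>t\<in>G - S. \<forall>s\<in>S. strictly_below G Pa t s"
  shows "\<forall>t\<in>G - S. Pa t \<subseteq> G - S"
proof (intro ballI subsetI)
  fix t p assume t: "t \<in> G - S" and p: "p \<in> Pa t"
  have "(p, t) \<in> dag_edges G Pa" using p t unfolding dag_edges_def by auto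
  then have "\<not> strictly_below G Pa t p"
    using credal_networkD(3)[OF net] t trancl_into_trancl[of t p _ t] unfolding strictly_below_def by blast
  then show "p \<in> G - S" using order t p credal_networkD(2)[OF net] by blast
qed

theorem theorem3:
  fixes G S :: "'n set" and Pa :: "'n \<Rightarrow> 'n set" and Xs :: "'n \<Rightarrow> 'v set"
    and M :: "'n \<Rightarrow> ('n \<Rightarrow> 'v) \<Rightarrow> ('v \<Rightarrow> real) set"
    and f :: "('n \<Rightarrow> 'v) \<Rightarrow> real"
  assumes net: "credal_network G Pa Xs M"
    and SG: "S \<subseteq> G"
    and order: "\<forall>t\<in>G - S. \<forall>s\<in>S. strictly_below G Pa t s"
  shows "lower_exp_irr G Pa Xs M f =
         sub_lower_exp G Pa Xs M (G - S) (\<lambda>_. undefined)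
           (\<lambda>xT. sub_lower_exp G Pa Xs M S (restrict xT (parents_of_set Pa S))
                   (\<lambda>xS. f (\<lambda>n. if n \<in> S then xS n else xT n)))"
proof -
  interpret network_split G "G - S" S Pa Xs M
    using net SG parents_outside_if_below[OF net order] by unfold_locales auto
  have "\<forall>t\<in>G - S. S \<subseteq> D t" using order unfolding descendants_def by blast
  from lower_exp_irr_iterated[OF this] show ?thesis
    unfolding sub_lower_exp_def cond_lower_exp_def join_def .
qed

end
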